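(* Let $n=1$, write $x=x_1$, $p^j=w^j_1$ ($j=1,\dots,m$), and let $F^{jj'}=F^{j'j}$ and $F^j$ ($j,j'=1,\dots,m$) be $C^\infty$ functions of $(x,w,p)\in\mathbb R\times\mathbb R^m\times\mathbb R^m$. Consider the problem of finding a first-order $C^\infty$ function $f(x,w,p)$ on $\mathbb R\times\mathbb R^m\times\mathbb R^m$ with $$\frac{\partial^2f}{\partial p^j\partial p^{j'}}=F^{jj'},\qquad f_{w^j}-f_{p^jx}-\sum_{k}f_{p^jw^k}\,p^k=F^j\qquad(j,j'=1,\dots,m)$$ (equivalently $e^j[f]=F^j-\sum_{j'}F^{jj'}w^{j'}_2$). Define $$\Phi^{j'j}=\frac{\partial F^j}{\partial p^{j'}}+\frac{\partial F^{jj'}}{\partial x}+\sum_k\frac{\partial F^{jj'}}{\partial w^k}p^k .$$ Fix any constant vector $c=(c^1,\dots,c^m)\in\mathbb R^m$ and put $\phi^{j'j}(x,w)=\Phi^{j'j}(x,w,c)$, $\psi^j(x,w)=F^j(x,w,c)$. Then a solution $f$ exists if and only if for all $j,j',j'',k$: (a) $\partial F^{jj'}/\partial p^{j''}=\partial F^{jj''}/\partial p^{j'}$; (b) $\Phi^{j'j}+\Phi^{jj'}=0$; (c) $\partial\Phi^{j'j}/\partial p^{j''}=\partial F^{j'j''}/\partial w^j-\partial F^{jj''}/\partial w^{j'}$; (d) $\partial_{w^k}\phi^{j'j}+\partial_{w^{j'}}\phi^{jk}+\partial_{w^j}\phi^{kj'}=0$; (e) $\partial_{w^j}\psi^{j'}-\partial_{w^{j'}}\psi^j+\partial_x\phi^{j'j}+\sum_k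 c^k\partial_{w^k}\phi^{j'j}=0$. In that case, letting $\bar f$ be the unique solution of $\partial^2\bar f/\partial p^j\partial p^{j'}=F^{jj'}$ with $\bar f=\partial\bar f/\partial p^j=0$ at $p=c$, the solutions are exactly $$f=\bar f+\sum_j A^j(x,w)(p^j-c^j)+A(x,w),$$ where the $C^\infty$ functions $A^j,A$ of $(x,w)$ satisfy $$\partial_{w^j}A^{j'}-\partial_{w^{j'}}A^j=\phi^{j'j},\qquad \partial_{w^j}A=\psi^j+\partial_xA^j+\sum_k c^k\partial_{w^k}A^j\qquad(j,j'=1,\dots,m).$$
   Context: One independent variable $x$ and dependent variables $w^1,\dots,w^m$; first-order jet coordinates $p^j=w^j_1$ ($=dw^j/dx$), second-order $w^j_2$. For a first-order Lagrange function $f(x,w,p)$, $e^j[f]=f_{w^j}-\frac{d}{dx}f_{p^j}=f_{w^j}-f_{p^jx}-\sum_k f_{p^jw^k}p^k-\sum_k f_{p^jp^k}w^k_2$. (The base point $c$ is taken constant; the paper allows more general choices.) *)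

theory Defs
  imports "HOL-Analysis.Analysis"
begin

text \<open>C-infinity real-valued functions on a Euclidean space: differentiable everywhere,
  and every directional (Frechet) derivative is again C-infinity (greatest fixed point).\<close>
coinductive smooth_fn :: "('a::euclidean_space \<Rightarrow> real) \<Rightarrow> bool" where
  "(\<forall>z. f differentiable (at z)) \<Longrightarrow>
   (\<forall>v. smooth_fn (\<lambda>z. frechet_derivative f (at z) v)) \<Longrightarrow> smooth_fn f"

definition vupd :: "real^'m \<Rightarrow> 'm \<Rightarrow> real \<Rightarrow> real^'m" where
  "vupd w k t = (\<chi> i. if i = k then t else w $ i)"

type_synonym 'm fn3 = "real \<Rightarrow> real^'m \<Rightarrow> real^'m \<Rightarrow> real"
type_synonym 'm fn2 = "real \<Rightarrow> real^'m \<Rightarrow> real"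

definition smooth3 :: "'m::finite fn3 \<Rightarrow> bool" where
  "smooth3 g \<longleftrightarrow> smooth_fn (\<lambda>(x, w, p). g x w p)"
definition smooth2 :: "'m::finite fn2 \<Rightarrow> bool" where
  "smooth2 g \<longleftrightarrow> smooth_fn (\<lambda>(x, w). g x w)"

definition Dx :: "'m::finite fn3 \<Rightarrow> 'm fn3" where
  "Dx g = (\<lambda>x w p. deriv (\<lambda>t. g t w p) x)"
definition Dw :: "'m::finite \<Rightarrow> 'm fn3 \<Rightarrow> 'm fn3" where
  "Dw k g = (\<lambda>x w p. deriv (\<lambda>t. g x (vupd w k t) p) (w $ k))"
definition Dp :: "'m::finite \<Rightarrow> 'm fn3 \<Rightarrow> 'm fn3" where
  "Dp k g = (\<lambda>x w p. deriv (\<lambda>t. g x w (vupd p k t)) (p $ k))"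
definition Dx2 :: "'m::finite fn2 \<Rightarrow> 'm fn2" where
  "Dx2 g = (\<lambda>x w. deriv (\<lambda>t. g t w) x)"
definition Dw2 :: "'m::finite \<Rightarrow> 'm fn2 \<Rightarrow> 'm fn2" where
  "Dw2 k g = (\<lambda>x w. deriv (\<lambda>t. g x (vupd w k t)) (w $ k))"

definition is_solution :: "('m::finite \<Rightarrow> 'm \<Rightarrow> 'm fn3) \<Rightarrow> ('m \<Rightarrow> 'm fn3) \<Rightarrow> 'm fn3 \<Rightarrow> bool" where
  "is_solution FF F1 f \<longleftrightarrow> smooth3 f \<and>
     (\<forall>j j' x w p. Dp j (Dp j' f) x w p = FF j j' x w p) \<and>
     (\<forall>j x w p. Dw j f x w p - Dx (Dp j f) x w p
                 - (\<Sum>k\<in>UNIV. Dw k (Dp j f) x w p * p $ k) = F1 j x w p)"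

definition Phi :: "('m::finite \<Rightarrow> 'm \<Rightarrow> 'm fn3) \<Rightarrow> ('m \<Rightarrow> 'm fn3) \<Rightarrow> 'm \<Rightarrow> 'm \<Rightarrow> 'm fn3" where
  "Phi FF F1 j' j = (\<lambda>x w p. Dp j' (F1 j) x w p + Dx (FF j j') x w p
                      + (\<Sum>k\<in>UNIV. Dw k (FF j j') x w p * p $ k))"

end

theory Submission
  imports Defs
begin

text \<open>The first equation prescribes the Hessian of f in p, so f differs from the normalized
  p-potential fb of FF (which vanishes together with its p-gradient at p = c) by a function
  affine in p, f = fb + A^j (p^j - c^j) + A. The potential fb exists by integrating FF twice in
  p (Poincare lemma), which is possible by (a). By (c) the residual of the second equation for
  fb is affine in p, so that equation reduces to a system on (x, w) alone: the w-curl of (A^j)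
  must be phi, and the w-gradient of A must be psi^j + dx A^j + c^k dw^k A^j. Both are solved
  by the Poincare lemma in w, whose closedness hypotheses are exactly (b), (d) and (e).
  Conversely, (a) - (e) hold for every solution by symmetry of second derivatives.\<close>

section \<open>Smooth functions on Euclidean spaces\<close>

definition dirderiv :: "('a::euclidean_space \<Rightarrow> real) \<Rightarrow> 'a \<Rightarrow> 'a \<Rightarrow> real" where
  "dirderiv f v z = frechet_derivative f (at z) v"

lemma smooth_fn_differentiable: "smooth_fn f \<Longrightarrow> f differentiable (at z)"
  by (erule smooth_fn.cases) auto

lemma smooth_fn_dirderiv: "smooth_fn f \<Longrightarrow> smooth_fn (dirderiv f v)"
  unfolding dirderiv_def by (erule smooth_fn.cases) auto

lemma smooth_fn_has_derivative: "smooth_fn f \<Longrightarrow> (f has_derivative (\<lambda>v. dirderiv f v z)) (at z)"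
  unfolding dirderiv_def using smooth_fn_differentiable frechet_derivative_works by blast

lemma dirderiv_eqI: "(f has_derivative f') (at z) \<Longrightarrow> dirderiv f v z = f' v"
  unfolding dirderiv_def using frechet_derivative_at by metis

lemma linear_dirderiv: "smooth_fn f \<Longrightarrow> linear (\<lambda>v. dirderiv f v z)"
  using smooth_fn_has_derivative has_derivative_linear by blast

lemma dirderiv_scale_dir: "smooth_fn f \<Longrightarrow> dirderiv f (a *\<^sub>R v) z = a * dirderiv f v z"
  using linear_scale[OF linear_dirderiv] by simp

lemma dirderiv_zero_dir: "smooth_fn f \<Longrightarrow> dirderiv f 0 z = 0"
  using linear_0[OF linear_dirderiv] by blast

lemma dirderiv_sum_dir: "smooth_fn f \<Longrightarrow> dirderiv f (\<Sum>i\<in>I. v i) z = (\<Sum>i\<in>I. dirderiv f (v i) z)"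
  using linear_sum[OF linear_dirderiv] by blast

lemma smooth_fn_continuous_on: "smooth_fn f \<Longrightarrow> continuous_on S f"
  using smooth_fn_differentiable differentiable_imp_continuous_within
  by (blast intro: continuous_at_imp_continuous_on)

lemma continuous_on_smooth_fn_compose:
  "smooth_fn f \<Longrightarrow> continuous_on S g \<Longrightarrow> continuous_on S (\<lambda>x. f (g x))"
  using continuous_on_compose2[OF smooth_fn_continuous_on[of f UNIV]] by blast

lemma smooth_fn_line_derivative:
  assumes "smooth_fn f"
  shows "((\<lambda>t. f (z + t *\<^sub>R v)) has_real_derivative dirderiv f v (z + t *\<^sub>R v)) (at t within S)"
proof -
  have "((\<lambda>t. z + t *\<^sub>R v) has_derivative (\<lambda>h. h *\<^sub>R v)) (at t within S)"
    by (auto intro!: derivative_eq_intros)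
  from has_derivative_compose[OF this has_derivative_at_withinI[OF smooth_fn_has_derivative[OF assms]]]
  show ?thesis
    by (simp add: o_def has_field_derivative_def dirderiv_scale_dir[OF assms]
        mult.commute[of _ "dirderiv f v _"])
qed

lemma dirderiv_line_eqI:
  "smooth_fn f \<Longrightarrow> ((\<lambda>s. f (z + s *\<^sub>R v)) has_real_derivative D) (at 0) \<Longrightarrow> dirderiv f v z = D"
  using DERIV_unique[OF smooth_fn_line_derivative[of f z v 0 UNIV]] by simp

lemma deriv_line_eq_dirderiv:
  assumes "smooth_fn f"
  shows "deriv (\<lambda>t. f (z + (t - a) *\<^sub>R v)) a = dirderiv f v z"
proof -
  have "(\<lambda>t. f (z + (t - a) *\<^sub>R v)) = (\<lambda>t. f ((z - a *\<^sub>R v) + t *\<^sub>R v))"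
    by (simp add: algebra_simps)
  then show ?thesis
    using DERIV_imp_deriv[OF smooth_fn_line_derivative[OF assms, of "z - a *\<^sub>R v" v a UNIV]] by simp
qed

lemma smooth_fn_affine:
  assumes "linear l" shows "smooth_fn (\<lambda>z. l z + k)"
proof -
  define X where "X = (\<lambda>f::'a\<Rightarrow>real. \<exists>l k. linear l \<and> f = (\<lambda>z. l z + k))"
  have "X (\<lambda>z. l z + k)" using assms unfolding X_def by blast
  then show ?thesis
  proof (coinduct rule: smooth_fn.coinduct)
    case (smooth_fn f)
    then obtain l k where l: "linear l" and f: "f = (\<lambda>z. l z + k)" unfolding X_def by blast
    have d: "\<And>z. (f has_derivative l) (at z)"
      unfolding f using l
      by (auto intro!: has_derivative_add_const bounded_linear_imp_has_derivative
          simp: linear_conv_bounded_linear)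
    have "\<And>z v. frechet_derivative f (at z) v = l v"
      using frechet_derivative_at[OF d] by simp
    moreover have "linear (\<lambda>z::'a. 0::real)" by (simp add: linear_zero)
    ultimately have "\<And>v. X (\<lambda>z. frechet_derivative f (at z) v)"
      unfolding X_def by (intro allI exI[of _ "\<lambda>z. 0"]) auto
    then show ?case using d differentiableI by blast
  qed
qed

lemma smooth_fn_const: "smooth_fn (\<lambda>z. k)"
  using smooth_fn_affine[of "\<lambda>z. 0" k] by (simp add: linear_zero)

lemma smooth_fn_inner: "smooth_fn (\<lambda>z. z \<bullet> b)"
  using smooth_fn_affine[of "\<lambda>z. z \<bullet> b" 0] by (simp add: bounded_linear_inner_left bounded_linear.linear)

text \<open>Closure of smooth_fn under algebraic operations and composition is proved by
  coinduction up to the following inductive class, which is closed under directional derivatives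
  by the chain and product rules. The type argument fixes the intermediate space of compositions.\<close>

inductive smooth_gen :: "'a::euclidean_space itself \<Rightarrow> ('b::euclidean_space \<Rightarrow> real) \<Rightarrow> bool"
  for T where
  smooth_gen_base: "smooth_fn f \<Longrightarrow> smooth_gen T f"
| smooth_gen_comp: "smooth_fn (h::'a \<Rightarrow> real) \<Longrightarrow> (\<forall>i\<in>Basis. smooth_fn (\<lambda>z. \<Gamma> z \<bullet> i)) \<Longrightarrow>
    smooth_gen T (\<lambda>z. h (\<Gamma> z))"
| smooth_gen_add: "smooth_gen T f \<Longrightarrow> smooth_gen T g \<Longrightarrow> smooth_gen T (\<lambda>z. f z + g z)"
| smooth_gen_mult: "smooth_gen T f \<Longrightarrow> smooth_gen T g \<Longrightarrow> smooth_gen T (\<lambda>z. f z * g z)"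

lemma smooth_gen_sum:
  "finite I \<Longrightarrow> (\<And>i. i \<in> I \<Longrightarrow> smooth_gen T (g i)) \<Longrightarrow> smooth_gen T (\<lambda>z. \<Sum>i\<in>I. g i z)"
proof (induction I rule: finite_induct)
  case empty then show ?case using smooth_gen_base[OF smooth_fn_const[of 0]] by simp
qed (auto intro: smooth_gen_add)

lemma has_derivative_componentwise_smooth:
  fixes \<Gamma> :: "'b::euclidean_space \<Rightarrow> 'a::euclidean_space"
  assumes "\<forall>i\<in>Basis. smooth_fn (\<lambda>z. \<Gamma> z \<bullet> i)"
  shows "(\<Gamma> has_derivative (\<lambda>v. \<Sum>i\<in>Basis. dirderiv (\<lambda>z. \<Gamma> z \<bullet> i) v z *\<^sub>R i)) (at z)"
proof -
  have "((\<lambda>z. \<Sum>i\<in>Basis. (\<Gamma> z \<bullet> i) *\<^sub>R i) has_derivative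
          (\<lambda>v. \<Sum>i\<in>Basis. dirderiv (\<lambda>z. \<Gamma> z \<bullet> i) v z *\<^sub>R i)) (at z)"
    using assms by (intro has_derivative_sum has_derivative_scaleR_left smooth_fn_has_derivative) auto
  then show ?thesis by (simp add: euclidean_representation)
qed

lemma smooth_gen_frechet_derivative:
  assumes "smooth_gen T f" and "\<And>z. (f has_derivative f' z) (at z)"
    and "\<And>v. smooth_gen T (\<lambda>z. f' z v)"
  shows "(\<forall>z. f differentiable (at z)) \<and> (\<forall>v. smooth_gen T (\<lambda>z. frechet_derivative f (at z) v))"
proof -
  have "frechet_derivative f (at z) = f' z" for z
    using frechet_derivative_at[OF assms(2)] by simp
  then show ?thesis using assms differentiableI by fastforce
qed

lemma smooth_gen_step:
  "smooth_gen T f \<Longrightarrow> (\<forall>z. f differentiable (at z)) \<and> (\<forall>v. smooth_gen T (\<lambda>z. frechet_derivative f (at z) v))"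
proof (induction rule: smooth_gen.induct)
  case (smooth_gen_base f)
  then show ?case using smooth_fn_differentiable smooth_fn_dirderiv smooth_gen.smooth_gen_base
    unfolding dirderiv_def by metis
next
  case (smooth_gen_comp h \<Gamma>)
  show ?case
  proof (rule smooth_gen_frechet_derivative)
    fix z
    from has_derivative_compose[OF has_derivative_componentwise_smooth[OF smooth_gen_comp(2)]
        smooth_fn_has_derivative[OF smooth_gen_comp(1)]]
    show "((\<lambda>z. h (\<Gamma> z)) has_derivative
        (\<lambda>v. \<Sum>i\<in>Basis. dirderiv (\<lambda>z. \<Gamma> z \<bullet> i) v z * dirderiv h i (\<Gamma> z))) (at z)"
      by (simp add: o_def dirderiv_sum_dir[OF smooth_gen_comp(1)] dirderiv_scale_dir[OF smooth_gen_comp(1)])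
  next
    fix v
    show "smooth_gen T (\<lambda>z. \<Sum>i\<in>Basis. dirderiv (\<lambda>z. \<Gamma> z \<bullet> i) v z * dirderiv h i (\<Gamma> z))"
      using smooth_gen_comp
      by (intro smooth_gen_sum smooth_gen.smooth_gen_mult smooth_gen.smooth_gen_base
          smooth_gen.smooth_gen_comp smooth_fn_dirderiv) auto
  qed (rule smooth_gen.smooth_gen_comp[OF smooth_gen_comp])
next
  case (smooth_gen_add f g)
  then show ?case
    by (intro smooth_gen_frechet_derivative[where f'="\<lambda>z v. frechet_derivative f (at z) v + frechet_derivative g (at z) v"]
        smooth_gen.smooth_gen_add has_derivative_add frechet_derivative_works[THEN iffD1]) auto
next
  case (smooth_gen_mult f g)
  then show ?case
    by (intro smooth_gen_frechet_derivative[where f'="\<lambda>z v. f z * frechet_derivative g (at z) v + frechet_derivative f (at z) v * g z"]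
        smooth_gen.smooth_gen_add smooth_gen.smooth_gen_mult has_derivative_mult frechet_derivative_works[THEN iffD1]) auto
qed

lemma smooth_gen_smooth_fn: assumes "smooth_gen T f" shows "smooth_fn f"
  using assms by (coinduct rule: smooth_fn.coinduct) (use smooth_gen_step in blast)

lemma smooth_fn_add: "smooth_fn f \<Longrightarrow> smooth_fn g \<Longrightarrow> smooth_fn (\<lambda>z. f z + g z)"
  by (rule smooth_gen_smooth_fn[where T="TYPE(real)"]) (intro smooth_gen.intros)

lemma smooth_fn_mult: "smooth_fn f \<Longrightarrow> smooth_fn g \<Longrightarrow> smooth_fn (\<lambda>z. f z * g z)"
  by (rule smooth_gen_smooth_fn[where T="TYPE(real)"]) (intro smooth_gen.intros)

lemma smooth_fn_compose:
  fixes h :: "'a::euclidean_space \<Rightarrow> real" and \<Gamma> :: "'b::euclidean_space \<Rightarrow> 'a"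
  shows "smooth_fn h \<Longrightarrow> (\<forall>i\<in>Basis. smooth_fn (\<lambda>z. \<Gamma> z \<bullet> i)) \<Longrightarrow> smooth_fn (\<lambda>z. h (\<Gamma> z))"
  by (rule smooth_gen_smooth_fn[where T="TYPE('a)"]) (intro smooth_gen.intros)

lemma smooth_fn_sum:
  "finite I \<Longrightarrow> (\<And>i. i \<in> I \<Longrightarrow> smooth_fn (g i)) \<Longrightarrow> smooth_fn (\<lambda>z. \<Sum>i\<in>I. g i z)"
  by (rule smooth_gen_smooth_fn[where T="TYPE(real)"]) (intro smooth_gen_sum smooth_gen.intros)

lemma smooth_fn_diff: "smooth_fn f \<Longrightarrow> smooth_fn g \<Longrightarrow> smooth_fn (\<lambda>z. f z - g z)"
  using smooth_fn_add[of f "\<lambda>z. - 1 * g z"] smooth_fn_mult[OF smooth_fn_const, of g "- 1"] by simp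

lemma smooth_fn_compose_affine:
  assumes "smooth_fn h" "linear L"
  shows "smooth_fn (\<lambda>z. h (L z + b))"
proof (rule smooth_fn_compose[OF assms(1)], intro ballI)
  fix i :: 'a
  have "linear (\<lambda>z. L z \<bullet> i)" using assms(2) by (simp add: linear_iff inner_add_left)
  from smooth_fn_affine[OF this, of "b \<bullet> i"] show "smooth_fn (\<lambda>z. (L z + b) \<bullet> i)"
    by (simp add: inner_add_left)
qed

lemma dirderiv_add: "smooth_fn f \<Longrightarrow> smooth_fn g \<Longrightarrow> dirderiv (\<lambda>z. f z + g z) v z = dirderiv f v z + dirderiv g v z"
  by (intro dirderiv_eqI has_derivative_add smooth_fn_has_derivative)

lemma dirderiv_diff: "smooth_fn f \<Longrightarrow> smooth_fn g \<Longrightarrow> dirderiv (\<lambda>z. f z - g z) v z = dirderiv f v z - dirderiv g v z"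
  by (intro dirderiv_eqI has_derivative_diff smooth_fn_has_derivative)

lemma dirderiv_uminus: "smooth_fn f \<Longrightarrow> dirderiv (\<lambda>z. - f z) v z = - dirderiv f v z"
  by (intro dirderiv_eqI has_derivative_minus smooth_fn_has_derivative)

lemma dirderiv_mult:
  "smooth_fn f \<Longrightarrow> smooth_fn g \<Longrightarrow> dirderiv (\<lambda>z. f z * g z) v z = dirderiv f v z * g z + f z * dirderiv g v z"
  using dirderiv_eqI[OF has_derivative_mult[OF smooth_fn_has_derivative smooth_fn_has_derivative]]
  by (simp add: algebra_simps)

lemma dirderiv_sum:
  "finite S \<Longrightarrow> (\<And>i. i \<in> S \<Longrightarrow> smooth_fn (f i)) \<Longrightarrow>
    dirderiv (\<lambda>z. \<Sum>i\<in>S. f i z) v z = (\<Sum>i\<in>S. dirderiv (f i) v z)"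
  by (intro dirderiv_eqI has_derivative_sum smooth_fn_has_derivative)

lemma dirderiv_const: "dirderiv (\<lambda>z. k) v z = 0"
  using dirderiv_eqI[OF has_derivative_const] by blast

lemma dirderiv_inner: "dirderiv (\<lambda>z. z \<bullet> b) v z = v \<bullet> b"
  by (intro dirderiv_eqI[of _ "\<lambda>v. v \<bullet> b", simplified] bounded_linear_imp_has_derivative
      bounded_linear_inner_left)

lemma dirderiv_compose_affine:
  assumes "smooth_fn h" "linear L"
  shows "dirderiv (\<lambda>z. h (L z + b)) v z = dirderiv h (L v) (L z + b)"
proof -
  have "((\<lambda>z. L z + b) has_derivative L) (at z)"
    using assms(2) by (auto intro!: has_derivative_add_const bounded_linear_imp_has_derivative
        simp: linear_conv_bounded_linear)
  from has_derivative_compose[OF this smooth_fn_has_derivative[OF assms(1)]]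
  show ?thesis by (rule dirderiv_eqI[unfolded o_def])
qed

section \<open>Integrals depending on a parameter\<close>

lemma has_derivative_integral_param:
  fixes g :: "real \<times> 'a::euclidean_space \<Rightarrow> real"
  assumes g: "smooth_fn g"
  shows "((\<lambda>z. integral {0..1} (\<lambda>t. g (t, z))) has_derivative
          (\<lambda>v. integral {0..1} (\<lambda>t. dirderiv g (0, v) (t, z)))) (at z)"
proof -
  have dg: "((\<lambda>z. g (t, z)) has_derivative (\<lambda>v. dirderiv g (0, v) (t, z))) (at z)" for t z
  proof -
    have "((\<lambda>z. (t, z)) has_derivative (\<lambda>v. (0, v))) (at z)"
      by (auto intro!: derivative_eq_intros)
    from has_derivative_compose[OF this smooth_fn_has_derivative[OF g]] show ?thesis
      by (simp add: o_def)
  qed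
  define fx where "fx = (\<lambda>z t. Blinfun (\<lambda>v. dirderiv g (0, v) (t, z)))"
  have fx: "blinfun_apply (fx z t) = (\<lambda>v. dirderiv g (0, v) (t, z))" for z t
    unfolding fx_def by (rule bounded_linear_Blinfun_apply[OF has_derivative_bounded_linear[OF dg]])
  have cont_fx: "continuous_on (S \<times> cbox 0 1) (\<lambda>(x, t). fx x t)" for S
  proof (rule continuous_on_blinfun_componentwise)
    fix i :: 'a
    have "continuous_on (S \<times> cbox 0 1) (\<lambda>y. dirderiv g (0, i) (snd y, fst y))"
      by (intro continuous_on_smooth_fn_compose[OF smooth_fn_dirderiv[OF g]] continuous_intros)
    then show "continuous_on (S \<times> cbox 0 1) (\<lambda>x. blinfun_apply (case x of (x, t) \<Rightarrow> fx x t) i)"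
      by (simp add: split_beta fx)
  qed
  have "((\<lambda>z. integral (cbox 0 1) (\<lambda>t. g (t, z))) has_derivative blinfun_apply (integral (cbox 0 1) (fx z)))
         (at z within UNIV)"
  proof (rule leibniz_rule[where fx=fx])
    show "((\<lambda>x. g (t, x)) has_derivative blinfun_apply (fx x t)) (at x within UNIV)" for x t
      unfolding fx by (rule dg)
    show "(\<lambda>t. g (t, x)) integrable_on cbox 0 1" for x
      by (intro integrable_continuous continuous_on_smooth_fn_compose[OF g] continuous_intros)
  qed (use cont_fx in auto)
  moreover have "blinfun_apply (integral (cbox 0 1) (fx z)) = (\<lambda>v. integral {0..1} (\<lambda>t. dirderiv g (0, v) (t, z)))"
  proof -
    have "continuous_on (cbox 0 1) (fx z)"
    proof (rule continuous_on_blinfun_componentwise)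
      show "continuous_on (cbox 0 1) (\<lambda>t. blinfun_apply (fx z t) i)" for i
        unfolding fx by (intro continuous_on_smooth_fn_compose[OF smooth_fn_dirderiv[OF g]] continuous_intros)
    qed
    then have "fx z integrable_on cbox 0 1" by (rule integrable_continuous)
    then show ?thesis by (intro ext) (simp add: blinfun_apply_integral fx)
  qed
  ultimately show ?thesis by simp
qed

lemma smooth_fn_integral_param:
  fixes g :: "real \<times> 'a::euclidean_space \<Rightarrow> real"
  assumes "smooth_fn g"
  shows "smooth_fn (\<lambda>z. integral {0..1} (\<lambda>t. g (t, z)))"
proof -
  define X where "X = (\<lambda>F::'a \<Rightarrow> real. \<exists>g::real \<times> 'a \<Rightarrow> real.
    smooth_fn g \<and> F = (\<lambda>z. integral {0..1} (\<lambda>t. g (t, z))))"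
  have X0: "X (\<lambda>z. integral {0..1} (\<lambda>t. g (t, z)))"
    unfolding X_def by (intro exI[of _ g]) (simp add: assms)
  show ?thesis
  proof (rule smooth_fn.coinduct[of X, OF X0])
    fix F assume "X F"
    then obtain g :: "real \<times> 'a \<Rightarrow> real"
      where g: "smooth_fn g" and F: "F = (\<lambda>z. integral {0..1} (\<lambda>t. g (t, z)))"
      unfolding X_def by blast
    have d: "(F has_derivative (\<lambda>v. integral {0..1} (\<lambda>t. dirderiv g (0, v) (t, z)))) (at z)" for z
      unfolding F by (rule has_derivative_integral_param[OF g])
    have "X (\<lambda>z. frechet_derivative F (at z) v)" for v
    proof -
      have e: "(\<lambda>z. frechet_derivative F (at z) v) = (\<lambda>z. integral {0..1} (\<lambda>t. dirderiv g (0, v) (t, z)))"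
        by (intro ext) (simp add: frechet_derivative_at[OF d, symmetric])
      show ?thesis
        unfolding X_def by (rule exI[of _ "dirderiv g (0, v)"], rule conjI[OF smooth_fn_dirderiv[OF g] e])
    qed
    then show "\<exists>f. F = f \<and> (\<forall>z. f differentiable at z) \<and>
        (\<forall>v. X (\<lambda>z. frechet_derivative f (at z) v) \<or> smooth_fn (\<lambda>z. frechet_derivative f (at z) v))"
      using d differentiableI by blast
  qed
qed

lemma DERIV_integral_param:
  fixes h hs :: "real \<Rightarrow> real \<Rightarrow> real"
  assumes "\<And>s \<tau>. ((\<lambda>s. h s \<tau>) has_real_derivative hs s \<tau>) (at s)"
    and "\<And>s. continuous_on {0..1} (h s)"
    and "continuous_on UNIV (\<lambda>(s, \<tau>). hs s \<tau>)"
  shows "((\<lambda>s. integral {0..1} (h s)) has_real_derivative integral {0..1} (hs s0)) (at s0)"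
proof -
  have "((\<lambda>s. integral (cbox 0 1) (h s)) has_field_derivative integral (cbox 0 1) (hs s0)) (at s0 within UNIV)"
    by (rule leibniz_rule_field_derivative)
       (use assms in \<open>auto intro: integrable_continuous_real continuous_on_subset\<close>)
  then show ?thesis by simp
qed

lemma smooth_fn_increment_integral:
  assumes "smooth_fn G"
  shows "G (z + w) - G z = integral {0..1} (\<lambda>\<tau>. dirderiv G w (z + \<tau> *\<^sub>R w))"
proof -
  have "((\<lambda>\<tau>. dirderiv G w (z + \<tau> *\<^sub>R w)) has_integral (G (z + 1 *\<^sub>R w) - G (z + 0 *\<^sub>R w))) {0..1}"
    by (intro fundamental_theorem_of_calculus)
       (simp_all add: smooth_fn_line_derivative[OF assms] flip: has_real_derivative_iff_has_vector_derivative)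
  then show ?thesis by (simp add: integral_unique)
qed

section \<open>Symmetry of second derivatives\<close>

lemma dirderiv_along_line:
  assumes G: "smooth_fn G"
  shows "dirderiv G v (z + s *\<^sub>R u)
    = dirderiv G v z + integral {0..1} (\<lambda>\<tau>. s * dirderiv (dirderiv G u) v (z + (\<tau> * s) *\<^sub>R u))"
proof -
  have sGu: "smooth_fn (dirderiv G u)" and sP: "smooth_fn (dirderiv (dirderiv G u) v)"
    using G by (auto intro: smooth_fn_dirderiv)
  define I where "I = (\<lambda>r. integral {0..1} (\<lambda>\<tau>. s * dirderiv G u (z + \<tau> *\<^sub>R s *\<^sub>R u + r *\<^sub>R v)))"
  have increment: "G ((z + s *\<^sub>R u) + r *\<^sub>R v) = G (z + r *\<^sub>R v) + I r" for r
  proof -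
    have "G ((z + r *\<^sub>R v) + s *\<^sub>R u) - G (z + r *\<^sub>R v) = I r"
      unfolding I_def smooth_fn_increment_integral[OF G] dirderiv_scale_dir[OF G]
      by (simp add: algebra_simps)
    then show ?thesis by (simp add: algebra_simps)
  qed
  have "(I has_real_derivative integral {0..1} (\<lambda>\<tau>. s * dirderiv (dirderiv G u) v (z + \<tau> *\<^sub>R s *\<^sub>R u + 0 *\<^sub>R v))) (at 0)"
    unfolding I_def
  proof (rule DERIV_integral_param)
    show "continuous_on UNIV (\<lambda>(r, \<tau>). s * dirderiv (dirderiv G u) v (z + \<tau> *\<^sub>R s *\<^sub>R u + r *\<^sub>R v))"
      by (simp only: split_beta') (intro continuous_intros continuous_on_smooth_fn_compose[OF sP])
  next
    show "((\<lambda>r. s * dirderiv G u (z + \<tau> *\<^sub>R s *\<^sub>R u + r *\<^sub>R v)) has_real_derivative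
        s * dirderiv (dirderiv G u) v (z + \<tau> *\<^sub>R s *\<^sub>R u + r *\<^sub>R v)) (at r)" for r \<tau>
      by (intro DERIV_cmult smooth_fn_line_derivative sGu)
    show "continuous_on {0..1} (\<lambda>\<tau>. s * dirderiv G u (z + \<tau> *\<^sub>R s *\<^sub>R u + r *\<^sub>R v))" for r
      by (intro continuous_intros continuous_on_smooth_fn_compose[OF sGu])
  qed
  from DERIV_add[OF smooth_fn_line_derivative[OF G] this]
  have "((\<lambda>r. G ((z + s *\<^sub>R u) + r *\<^sub>R v)) has_real_derivative
          dirderiv G v z + integral {0..1} (\<lambda>\<tau>. s * dirderiv (dirderiv G u) v (z + (\<tau> * s) *\<^sub>R u))) (at 0)"
    unfolding increment by simp
  then show ?thesis by (rule dirderiv_line_eqI[OF G])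
qed

lemma dirderiv_commute:
  assumes G: "smooth_fn G"
  shows "dirderiv (dirderiv G u) v z = dirderiv (dirderiv G v) u z"
proof -
  define P where "P = dirderiv (dirderiv G u) v"
  have sP: "smooth_fn P" unfolding P_def by (intro smooth_fn_dirderiv G)
  define I where "I = (\<lambda>s. integral {0..1} (\<lambda>\<tau>. P (z + (\<tau> * s) *\<^sub>R u)))"
  have "(I has_real_derivative integral {0..1} (\<lambda>\<tau>. \<tau> * dirderiv P u (z + (\<tau> * 0) *\<^sub>R u))) (at 0)"
    unfolding I_def
  proof (rule DERIV_integral_param)
    fix s \<tau>
    show "((\<lambda>s. P (z + (\<tau> * s) *\<^sub>R u)) has_real_derivative \<tau> * dirderiv P u (z + (\<tau> * s) *\<^sub>R u)) (at s)"
      using smooth_fn_line_derivative[OF sP, of z "\<tau> *\<^sub>R u" s UNIV]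
      by (simp add: dirderiv_scale_dir[OF sP] mult.commute)
  next
    show "continuous_on UNIV (\<lambda>(s, \<tau>). \<tau> * dirderiv P u (z + (\<tau> * s) *\<^sub>R u))"
      by (simp only: split_beta')
         (intro continuous_intros continuous_on_smooth_fn_compose[OF smooth_fn_dirderiv[OF sP]])
  qed (intro continuous_intros continuous_on_smooth_fn_compose[OF sP])
  from DERIV_add[OF DERIV_const DERIV_mult[OF DERIV_ident this]]
  have "((\<lambda>s. dirderiv G v z + s * I s) has_real_derivative I 0) (at 0)"
    by simp
  moreover have "dirderiv G v (z + s *\<^sub>R u) = dirderiv G v z + s * I s" for s
    unfolding dirderiv_along_line[OF G] I_def P_def by simp
  ultimately have "dirderiv (dirderiv G v) u z = I 0"
    using dirderiv_line_eqI[OF smooth_fn_dirderiv[OF G]] by simp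
  then show ?thesis unfolding I_def P_def by simp
qed

section \<open>The Poincare lemma along an orthonormal frame\<close>

text \<open>The primitive is
  obtained by integrating along the path which contracts the e-components of z - z0 linearly
  to zero; the remaining directions are carried along as parameters.\<close>

locale orthonormal_frame =
  fixes e :: "'i::finite \<Rightarrow> 'a::euclidean_space" and z0 :: 'a
  assumes inner_frame: "\<And>i j. e i \<bullet> e j = (if i = j then 1 else 0)"
begin

definition coord :: "'i \<Rightarrow> 'a \<Rightarrow> real" where "coord i z = (z - z0) \<bullet> e i"
definition displacement :: "'a \<Rightarrow> 'a" where "displacement z = (\<Sum>k\<in>UNIV. coord k z *\<^sub>R e k)"
definition cone_path :: "'a \<Rightarrow> real \<Rightarrow> 'a" where "cone_path z t = z - (1 - t) *\<^sub>R displacement z"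

definition cone_integral :: "nat \<Rightarrow> ('i \<Rightarrow> 'a \<Rightarrow> real) \<Rightarrow> 'a \<Rightarrow> real" where
  "cone_integral n \<beta> z = integral {0..1} (\<lambda>t. t ^ n * (\<Sum>i\<in>UNIV. \<beta> i (cone_path z t) * coord i z))"

lemma coord_shift: "coord i (z + s *\<^sub>R e j) = coord i z + (if i = j then s else 0)"
  unfolding coord_def by (simp add: inner_diff_left inner_add_left inner_frame algebra_simps)

lemma displacement_shift: "displacement (z + s *\<^sub>R e j) = displacement z + s *\<^sub>R e j"
proof -
  have "displacement (z + s *\<^sub>R e j) = (\<Sum>k\<in>UNIV. coord k z *\<^sub>R e k + (if k = j then s *\<^sub>R e k else 0))"
    unfolding displacement_def coord_shift by (intro sum.cong) (auto simp: scaleR_add_left)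
  also have "\<dots> = displacement z + s *\<^sub>R e j"
    unfolding displacement_def sum.distrib by (simp add: if_distrib cong: if_cong)
  finally show ?thesis .
qed

lemma cone_path_shift: "cone_path (z + s *\<^sub>R e j) t = cone_path z t + s *\<^sub>R (t *\<^sub>R e j)"
  unfolding cone_path_def displacement_shift by (simp add: algebra_simps)

lemma cone_path_line: "cone_path z t = (z - displacement z) + t *\<^sub>R displacement z"
  unfolding cone_path_def by (simp add: algebra_simps)

lemma dirderiv_displacement:
  "smooth_fn h \<Longrightarrow> dirderiv h (displacement z) y = (\<Sum>k\<in>UNIV. coord k z * dirderiv h (e k) y)"
  unfolding displacement_def by (simp add: dirderiv_sum_dir dirderiv_scale_dir)

lemma continuous_on_cone_path_compose:
  assumes "smooth_fn h"
  shows "continuous_on S (\<lambda>t. h (cone_path z t))"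
  unfolding cone_path_def by (intro continuous_on_smooth_fn_compose[OF assms] continuous_intros)

lemma smooth_fn_cone_integrand:
  assumes "\<And>i. smooth_fn (\<beta> i)"
  shows "smooth_fn (\<lambda>y::real \<times> 'a. fst y ^ n * (\<Sum>i\<in>UNIV. \<beta> i (cone_path (snd y) (fst y)) * coord i (snd y)))"
proof -
  have fst: "smooth_fn (\<lambda>y::real \<times> 'a. fst y)"
    using smooth_fn_inner[of "(1::real, 0::'a)"] by (simp add: inner_Pair_0)
  have snd: "smooth_fn (\<lambda>y::real \<times> 'a. snd y \<bullet> b)" for b
    using smooth_fn_inner[of "(0::real, b)"] by (simp add: inner_Pair_0)
  have coord: "smooth_fn (\<lambda>y::real \<times> 'a. coord i (snd y))" for i
    using smooth_fn_diff[OF snd[of "e i"] smooth_fn_const[of "z0 \<bullet> e i"]]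
    unfolding coord_def by (simp add: inner_diff_left)
  have path: "smooth_fn (\<lambda>y::real \<times> 'a. cone_path (snd y) (fst y) \<bullet> b)" for b
  proof -
    have "smooth_fn (\<lambda>y::real \<times> 'a. (1 - fst y) * (\<Sum>k\<in>UNIV. coord k (snd y) * (e k \<bullet> b)))"
      by (intro smooth_fn_mult smooth_fn_diff smooth_fn_sum smooth_fn_const fst coord) simp
    from smooth_fn_diff[OF snd this] show ?thesis
      unfolding cone_path_def displacement_def by (simp add: inner_diff_left inner_sum_left)
  qed
  have pow: "smooth_fn (\<lambda>y::real \<times> 'a. fst y ^ n)"
    by (induction n) (simp_all add: smooth_fn_const smooth_fn_mult fst)
  have \<beta>_path: "smooth_fn (\<lambda>y::real \<times> 'a. \<beta> i (cone_path (snd y) (fst y)))" for i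
    using path by (intro smooth_fn_compose[OF assms]) blast
  have "smooth_fn (\<lambda>y::real \<times> 'a. \<Sum>i\<in>UNIV. \<beta> i (cone_path (snd y) (fst y)) * coord i (snd y))"
    by (rule smooth_fn_sum) (simp_all add: smooth_fn_mult[OF \<beta>_path coord])
  from smooth_fn_mult[OF pow this] show ?thesis .
qed

lemma smooth_fn_cone_integral:
  assumes "\<And>i. smooth_fn (\<beta> i)"
  shows "smooth_fn (cone_integral n \<beta>)"
proof -
  have "cone_integral n \<beta> = (\<lambda>z. integral {0..1} (\<lambda>t. fst (t, z) ^ n *
      (\<Sum>i\<in>UNIV. \<beta> i (cone_path (snd (t, z)) (fst (t, z))) * coord i (snd (t, z)))))"
    by (simp add: fun_eq_iff cone_integral_def)
  then show ?thesis
    using smooth_fn_integral_param[OF smooth_fn_cone_integrand[OF assms, of n]] by simp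
qed

lemma cone_integral_base: "(\<And>i. coord i z = 0) \<Longrightarrow> cone_integral n \<beta> z = 0"
  unfolding cone_integral_def by simp

lemma dirderiv_cone_integral:
  assumes sm: "\<And>i. smooth_fn (\<beta> i)"
  shows "dirderiv (cone_integral n \<beta>) (e j) z = integral {0..1} (\<lambda>t.
    t ^ n * (t * (\<Sum>i\<in>UNIV. coord i z * dirderiv (\<beta> i) (e j) (cone_path z t)) + \<beta> j (cone_path z t)))"
proof (rule dirderiv_line_eqI[OF smooth_fn_cone_integral[OF sm]])
  define d where "d = (\<lambda>i. if i = j then 1 else (0::real))"
  define h where "h = (\<lambda>s t. t ^ n * (\<Sum>i\<in>UNIV. \<beta> i (cone_path z t + s *\<^sub>R (t *\<^sub>R e j)) * (coord i z + d i * s)))"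
  define hs where "hs = (\<lambda>s t. t ^ n * (\<Sum>i\<in>UNIV.
    (t * dirderiv (\<beta> i) (e j) (cone_path z t + s *\<^sub>R (t *\<^sub>R e j))) * (coord i z + d i * s)
    + d i * \<beta> i (cone_path z t + s *\<^sub>R (t *\<^sub>R e j))))"
  have "coord i (z + s *\<^sub>R e j) = coord i z + d i * s" for i s
    by (simp add: coord_shift d_def)
  then have "cone_integral n \<beta> (z + s *\<^sub>R e j) = integral {0..1} (h s)" for s
    unfolding cone_integral_def h_def cone_path_shift by simp
  moreover have "((\<lambda>s. integral {0..1} (h s)) has_real_derivative integral {0..1} (hs 0)) (at 0)"
  proof (rule DERIV_integral_param)
    fix s t
    show "((\<lambda>s. h s t) has_real_derivative hs s t) (at s)"
      unfolding h_def hs_def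
    proof (intro DERIV_cmult DERIV_sum)
      fix i
      have "((\<lambda>s. \<beta> i (cone_path z t + s *\<^sub>R (t *\<^sub>R e j)) * (coord i z + d i * s)) has_real_derivative
          dirderiv (\<beta> i) (t *\<^sub>R e j) (cone_path z t + s *\<^sub>R (t *\<^sub>R e j)) * (coord i z + d i * s)
          + (0 + d i * 1) * \<beta> i (cone_path z t + s *\<^sub>R (t *\<^sub>R e j))) (at s)"
        by (rule DERIV_mult[OF smooth_fn_line_derivative[OF sm] DERIV_add[OF DERIV_const DERIV_cmult[OF DERIV_ident]]])
      then show "((\<lambda>s. \<beta> i (cone_path z t + s *\<^sub>R (t *\<^sub>R e j)) * (coord i z + d i * s)) has_real_derivative
          (t * dirderiv (\<beta> i) (e j) (cone_path z t + s *\<^sub>R (t *\<^sub>R e j))) * (coord i z + d i * s)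
          + d i * \<beta> i (cone_path z t + s *\<^sub>R (t *\<^sub>R e j))) (at s)"
        by (simp add: dirderiv_scale_dir[OF sm])
    qed
  next
    show "continuous_on {0..1} (h s)" for s
      unfolding h_def cone_path_def
      by (intro continuous_intros continuous_on_smooth_fn_compose[OF sm])
    show "continuous_on UNIV (\<lambda>(s, t). hs s t)"
      unfolding hs_def cone_path_def
      by (simp only: split_beta')
         (intro continuous_intros continuous_on_smooth_fn_compose[OF sm]
           continuous_on_smooth_fn_compose[OF smooth_fn_dirderiv[OF sm]])
  qed
  moreover have "hs 0 = (\<lambda>t. t ^ n * (t * (\<Sum>i\<in>UNIV. coord i z * dirderiv (\<beta> i) (e j) (cone_path z t))
      + \<beta> j (cone_path z t)))"
  proof
    fix t
    have "d i * \<beta> i (cone_path z t) = (if j = i then \<beta> i (cone_path z t) else 0)" for i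
      by (simp add: d_def)
    then show "hs 0 t = t ^ n * (t * (\<Sum>i\<in>UNIV. coord i z * dirderiv (\<beta> i) (e j) (cone_path z t))
      + \<beta> j (cone_path z t))"
      unfolding hs_def by (simp add: sum.distrib sum_distrib_left algebra_simps)
  qed
  ultimately show "((\<lambda>s. cone_integral n \<beta> (z + s *\<^sub>R e j)) has_real_derivative
      integral {0..1} (\<lambda>t. t ^ n * (t * (\<Sum>i\<in>UNIV. coord i z * dirderiv (\<beta> i) (e j) (cone_path z t))
        + \<beta> j (cone_path z t)))) (at 0)"
    by simp
qed

lemma integral_cone_path_derivative:
  assumes "smooth_fn h"
  shows "integral {0..1} (\<lambda>t. real (Suc n) * t ^ n * h (cone_path z t)
    + t ^ Suc n * dirderiv h (displacement z) (cone_path z t)) = h z"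
proof -
  have "((\<lambda>t. real (Suc n) * t ^ n * h (cone_path z t) + t ^ Suc n * dirderiv h (displacement z) (cone_path z t))
      has_integral (1 ^ Suc n * h (cone_path z 1) - 0 ^ Suc n * h (cone_path z 0))) {0..1}"
  proof (rule fundamental_theorem_of_calculus)
    fix t :: real
    have "((\<lambda>t. t ^ Suc n * h (cone_path z t)) has_real_derivative
        real (Suc n) * t ^ n * h (cone_path z t) + t ^ Suc n * dirderiv h (displacement z) (cone_path z t))
        (at t within {0..1})"
    proof -
      have "((\<lambda>t. h (cone_path z t)) has_real_derivative dirderiv h (displacement z) (cone_path z t))
          (at t within {0..1})"
        unfolding cone_path_line by (rule smooth_fn_line_derivative[OF assms])
      from DERIV_mult[OF DERIV_pow[of "Suc n"] this] show ?thesis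
        by (simp add: mult.commute[of "dirderiv h _ _"])
    qed
    then show "((\<lambda>t. t ^ Suc n * h (cone_path z t)) has_vector_derivative
        real (Suc n) * t ^ n * h (cone_path z t) + t ^ Suc n * dirderiv h (displacement z) (cone_path z t))
        (at t within {0..1})"
      by (simp add: has_real_derivative_iff_has_vector_derivative)
  qed simp
  then show ?thesis by (simp add: integral_unique cone_path_def)
qed

lemma poincare_closed_1form:
  assumes sm: "\<And>i. smooth_fn (\<beta> i)"
    and closed: "\<And>i j z. dirderiv (\<beta> i) (e j) z = dirderiv (\<beta> j) (e i) z"
  shows "dirderiv (cone_integral 0 \<beta>) (e j) z = \<beta> j z"
proof -
  have "(\<Sum>i\<in>UNIV. coord i z * dirderiv (\<beta> i) (e j) y) = dirderiv (\<beta> j) (displacement z) y" for y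
    unfolding dirderiv_displacement[OF sm] by (intro sum.cong refl) (simp only: closed[of _ j])
  then show ?thesis
    unfolding dirderiv_cone_integral[OF sm]
    using integral_cone_path_derivative[OF sm[of j], of 0 z] by (simp add: algebra_simps)
qed

lemma poincare_closed_2form:
  assumes sm: "\<And>i j. smooth_fn (\<omega> i j)" and anti: "\<And>i j z. \<omega> i j z = - \<omega> j i z"
    and closed: "\<And>i j k z. dirderiv (\<omega> i j) (e k) z + dirderiv (\<omega> j k) (e i) z + dirderiv (\<omega> k i) (e j) z = 0"
  shows "dirderiv (cone_integral 1 (\<lambda>k. \<omega> k j')) (e j) z - dirderiv (cone_integral 1 (\<lambda>k. \<omega> k j)) (e j') z
    = \<omega> j j' z"
proof -
  have closed': "dirderiv (\<omega> k j') (e j) y - dirderiv (\<omega> k j) (e j') y = dirderiv (\<omega> j j') (e k) y" for k y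
  proof -
    have "\<omega> j' k = (\<lambda>y. - \<omega> k j' y)" by (intro ext anti)
    then have "dirderiv (\<omega> j' k) (e j) y = - dirderiv (\<omega> k j') (e j) y"
      using dirderiv_uminus[OF sm] by simp
    then show ?thesis using closed[of j j' k y] by simp
  qed
  have integrable: "(\<lambda>t. t ^ 1 * (t * (\<Sum>k\<in>UNIV. coord k z * dirderiv (\<omega> k i) (e l) (cone_path z t))
      + \<omega> l i (cone_path z t))) integrable_on {0..1}" for i l
    by (intro integrable_continuous_interval continuous_intros continuous_on_cone_path_compose
        sm smooth_fn_dirderiv)
  have "dirderiv (cone_integral 1 (\<lambda>k. \<omega> k j')) (e j) z - dirderiv (cone_integral 1 (\<lambda>k. \<omega> k j)) (e j') z
      = integral {0..1} (\<lambda>t. real (Suc 1) * t ^ 1 * \<omega> j j' (cone_path z t)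
          + t ^ Suc 1 * dirderiv (\<omega> j j') (displacement z) (cone_path z t))"
    unfolding dirderiv_cone_integral[OF sm] integral_diff[OF integrable integrable, symmetric]
  proof (rule integral_cong)
    fix t
    have "(\<Sum>k\<in>UNIV. coord k z * dirderiv (\<omega> k j') (e j) (cone_path z t))
        - (\<Sum>k\<in>UNIV. coord k z * dirderiv (\<omega> k j) (e j') (cone_path z t))
        = dirderiv (\<omega> j j') (displacement z) (cone_path z t)"
      unfolding dirderiv_displacement[OF sm] sum_subtractf[symmetric]
      by (intro sum.cong refl) (simp only: right_diff_distrib[symmetric] closed')
    then show "t ^ 1 * (t * (\<Sum>k\<in>UNIV. coord k z * dirderiv (\<omega> k j') (e j) (cone_path z t))
          + \<omega> j j' (cone_path z t))
        - t ^ 1 * (t * (\<Sum>k\<in>UNIV. coord k z * dirderiv (\<omega> k j) (e j') (cone_path z t))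
          + \<omega> j' j (cone_path z t))
        = real (Suc 1) * t ^ 1 * \<omega> j j' (cone_path z t)
          + t ^ Suc 1 * dirderiv (\<omega> j j') (displacement z) (cone_path z t)"
      using anti[of j' j "cone_path z t"] by (simp add: algebra_simps power2_eq_square)
  qed
  also have "\<dots> = \<omega> j j' z" by (rule integral_cone_path_derivative[OF sm])
  finally show ?thesis .
qed

end

section \<open>Calculus for functions of (x, w, p) and of (x, w)\<close>

type_synonym 'm pt3 = "real \<times> (real^'m) \<times> (real^'m)"
type_synonym 'm pt2 = "real \<times> (real^'m)"

definition uncurry3 :: "'m::finite fn3 \<Rightarrow> 'm pt3 \<Rightarrow> real" where
  "uncurry3 g = (\<lambda>(x, w, p). g x w p)"
definition uncurry2 :: "'m::finite fn2 \<Rightarrow> 'm pt2 \<Rightarrow> real" where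
  "uncurry2 g = (\<lambda>(x, w). g x w)"

definition Ddir :: "'m::finite pt3 \<Rightarrow> 'm fn3 \<Rightarrow> 'm fn3" where
  "Ddir e g = (\<lambda>x w p. dirderiv (uncurry3 g) e (x, w, p))"
definition Ddir2 :: "'m::finite pt2 \<Rightarrow> 'm fn2 \<Rightarrow> 'm fn2" where
  "Ddir2 e g = (\<lambda>x w. dirderiv (uncurry2 g) e (x, w))"

definition eX :: "'m::finite pt3" where "eX = (1, 0, 0)"
definition eW :: "'m::finite \<Rightarrow> 'm pt3" where "eW k = (0, axis k 1, 0)"
definition eP :: "'m::finite \<Rightarrow> 'm pt3" where "eP k = (0, 0, axis k 1)"
definition eX2 :: "'m::finite pt2" where "eX2 = (1, 0)"
definition eW2 :: "'m::finite \<Rightarrow> 'm pt2" where "eW2 k = (0, axis k 1)"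

lemma uncurry3_apply [simp]: "uncurry3 g (x, w, p) = g x w p"
  by (simp add: uncurry3_def)
lemma uncurry2_apply [simp]: "uncurry2 g (x, w) = g x w"
  by (simp add: uncurry2_def)

lemma smooth3_iff: "smooth3 g \<longleftrightarrow> smooth_fn (uncurry3 g)"
  by (simp add: smooth3_def uncurry3_def)
lemma smooth2_iff: "smooth2 g \<longleftrightarrow> smooth_fn (uncurry2 g)"
  by (simp add: smooth2_def uncurry2_def)

lemma uncurry3_Ddir: "uncurry3 (Ddir e g) = dirderiv (uncurry3 g) e"
  by (simp add: uncurry3_def Ddir_def)
lemma uncurry2_Ddir2: "uncurry2 (Ddir2 e g) = dirderiv (uncurry2 g) e"
  by (simp add: uncurry2_def Ddir2_def)

lemma dirderiv_uncurry3: "dirderiv (uncurry3 g) e z = Ddir e g (fst z) (fst (snd z)) (snd (snd z))"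
  by (cases z) (simp add: Ddir_def)
lemma dirderiv_uncurry2: "dirderiv (uncurry2 g) e z = Ddir2 e g (fst z) (snd z)"
  by (cases z) (simp add: Ddir2_def)

lemma smooth3_Ddir [simp]: "smooth3 g \<Longrightarrow> smooth3 (Ddir e g)"
  by (simp add: smooth3_iff uncurry3_Ddir smooth_fn_dirderiv)
lemma smooth2_Ddir2 [simp]: "smooth2 g \<Longrightarrow> smooth2 (Ddir2 e g)"
  by (simp add: smooth2_iff uncurry2_Ddir2 smooth_fn_dirderiv)

lemma Ddir_commute: assumes "smooth3 g" shows "Ddir a (Ddir b g) = Ddir b (Ddir a g)"
  unfolding Ddir_def[of a "Ddir b g"] Ddir_def[of b "Ddir a g"] uncurry3_Ddir
  using dirderiv_commute[OF assms[unfolded smooth3_iff]] by simp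
lemma Ddir2_commute: assumes "smooth2 g" shows "Ddir2 a (Ddir2 b g) = Ddir2 b (Ddir2 a g)"
  unfolding Ddir2_def[of a "Ddir2 b g"] Ddir2_def[of b "Ddir2 a g"] uncurry2_Ddir2
  using dirderiv_commute[OF assms[unfolded smooth2_iff]] by simp

lemma axis_one_nth [simp]: "axis k (1::real) $ j = (if j = k then 1 else 0)"
  by (simp add: axis_def)

lemma mult_if_one_zero [simp]:
  "(a::real) * (if P then 1 else 0) = (if P then a else 0)"
  "(if P then 1 else 0) * (a::real) = (if P then a else 0)"
  by simp_all

lemma inner_eP: "eP i \<bullet> eP j = (if i = j then 1 else (0::real))"
  by (simp add: eP_def inner_Pair inner_axis)
lemma inner_eW2: "eW2 i \<bullet> eW2 j = (if i = j then 1 else (0::real))"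
  by (simp add: eW2_def inner_Pair inner_axis)

lemma vupd_eq: "vupd w k t = w + (t - w $ k) *\<^sub>R axis k 1"
  by (simp add: vupd_def vec_eq_iff axis_def)

lemma Dp_eq_Ddir: assumes "smooth3 g" shows "Dp k g = Ddir (eP k) g"
proof (intro ext)
  fix x w p
  have "(\<lambda>t. g x w (vupd p k t)) = (\<lambda>t. uncurry3 g ((x, w, p) + (t - p $ k) *\<^sub>R eP k))"
    by (simp add: vupd_eq eP_def)
  then show "Dp k g x w p = Ddir (eP k) g x w p"
    unfolding Dp_def Ddir_def using deriv_line_eq_dirderiv[OF assms[unfolded smooth3_iff]] by simp
qed

lemma Dw_eq_Ddir: assumes "smooth3 g" shows "Dw k g = Ddir (eW k) g"
proof (intro ext)
  fix x w p
  have "(\<lambda>t. g x (vupd w k t) p) = (\<lambda>t. uncurry3 g ((x, w, p) + (t - w $ k) *\<^sub>R eW k))"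
    by (simp add: vupd_eq eW_def)
  then show "Dw k g x w p = Ddir (eW k) g x w p"
    unfolding Dw_def Ddir_def using deriv_line_eq_dirderiv[OF assms[unfolded smooth3_iff]] by simp
qed

lemma Dx_eq_Ddir: assumes "smooth3 g" shows "Dx g = Ddir eX g"
proof (intro ext)
  fix x w p
  have "(\<lambda>t. g t w p) = (\<lambda>t. uncurry3 g ((x, w, p) + (t - x) *\<^sub>R eX))"
    by (simp add: eX_def)
  then show "Dx g x w p = Ddir eX g x w p"
    unfolding Dx_def Ddir_def using deriv_line_eq_dirderiv[OF assms[unfolded smooth3_iff]] by simp
qed

lemma Dw2_eq_Ddir2: assumes "smooth2 g" shows "Dw2 k g = Ddir2 (eW2 k) g"
proof (intro ext)
  fix x w
  have "(\<lambda>t. g x (vupd w k t)) = (\<lambda>t. uncurry2 g ((x, w) + (t - w $ k) *\<^sub>R eW2 k))"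
    by (simp add: vupd_eq eW2_def)
  then show "Dw2 k g x w = Ddir2 (eW2 k) g x w"
    unfolding Dw2_def Ddir2_def using deriv_line_eq_dirderiv[OF assms[unfolded smooth2_iff]] by simp
qed

lemma Dx2_eq_Ddir2: assumes "smooth2 g" shows "Dx2 g = Ddir2 eX2 g"
proof (intro ext)
  fix x w
  have "(\<lambda>t. g t w) = (\<lambda>t. uncurry2 g ((x, w) + (t - x) *\<^sub>R eX2))"
    by (simp add: eX2_def)
  then show "Dx2 g x w = Ddir2 eX2 g x w"
    unfolding Dx2_def Ddir2_def using deriv_line_eq_dirderiv[OF assms[unfolded smooth2_iff]] by simp
qed

lemma Dw2_lift: "Dw2 k a x w = Dw k (\<lambda>x w p. a x w) x w p"
  by (simp add: Dw2_def Dw_def)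
lemma Dx2_lift: "Dx2 a x w = Dx (\<lambda>x w p. a x w) x w p"
  by (simp add: Dx2_def Dx_def)

text \<open>Evaluation at p = c and lifting a function of (x, w) to one of (x, w, p) are compositions
  with affine maps; these are their linear parts.\<close>

definition freeze_p :: "'m::finite pt3 \<Rightarrow> 'm pt3" where "freeze_p z = (fst z, fst (snd z), 0)"
definition proj_xw :: "'m::finite pt3 \<Rightarrow> 'm pt2" where "proj_xw z = (fst z, fst (snd z))"
definition embed_xw :: "'m::finite pt2 \<Rightarrow> 'm pt3" where "embed_xw z = (fst z, snd z, 0)"

lemma linear_freeze_p: "linear freeze_p"
  unfolding freeze_p_def by (auto simp: linear_iff)
lemma linear_proj_xw: "linear proj_xw"
  unfolding proj_xw_def by (auto simp: linear_iff)
lemma linear_embed_xw: "linear embed_xw"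
  unfolding embed_xw_def by (auto simp: linear_iff)

lemma freeze_p_basis [simp]: "freeze_p eX = eX" "freeze_p (eW k) = eW k" "freeze_p (eP k) = 0"
  by (simp_all add: freeze_p_def eX_def eW_def eP_def zero_prod_def)
lemma proj_xw_basis [simp]: "proj_xw eX = eX2" "proj_xw (eW k) = eW2 k" "proj_xw (eP k) = 0"
  by (simp_all add: proj_xw_def eX_def eW_def eP_def eX2_def eW2_def zero_prod_def)
lemma p_part_basis [simp]:
  "snd (snd (eX::'m::finite pt3)) = 0" "snd (snd (eW k)) = 0" "snd (snd (eP k)) = axis k 1"
  by (simp_all add: eX_def eW_def eP_def)

lemma uncurry3_add: "uncurry3 (\<lambda>x w p. a x w p + b x w p) = (\<lambda>z. uncurry3 a z + uncurry3 b z)"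
  by (auto simp: uncurry3_def)
lemma uncurry3_diff: "uncurry3 (\<lambda>x w p. a x w p - b x w p) = (\<lambda>z. uncurry3 a z - uncurry3 b z)"
  by (auto simp: uncurry3_def)
lemma uncurry3_mult: "uncurry3 (\<lambda>x w p. a x w p * b x w p) = (\<lambda>z. uncurry3 a z * uncurry3 b z)"
  by (auto simp: uncurry3_def)
lemma uncurry3_sum: "uncurry3 (\<lambda>x w p. \<Sum>i\<in>S. a i x w p) = (\<lambda>z. \<Sum>i\<in>S. uncurry3 (a i) z)"
  by (auto simp: uncurry3_def)
lemma uncurry3_const: "uncurry3 (\<lambda>x w p. k) = (\<lambda>z. k)"
  by (auto simp: uncurry3_def)
lemma uncurry3_p_coord: "uncurry3 (\<lambda>x w p. p $ k) = (\<lambda>z. z \<bullet> eP k)"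
  by (auto simp: uncurry3_def eP_def inner_axis)
lemma uncurry3_at_c: "uncurry3 (\<lambda>x w p. f x w c) = (\<lambda>z. uncurry3 f (freeze_p z + (0, 0, c)))"
  by (auto simp: uncurry3_def freeze_p_def)
lemma uncurry3_lift: "uncurry3 (\<lambda>x w p. a x w) = (\<lambda>z. uncurry2 a (proj_xw z + 0))"
  by (auto simp: uncurry3_def proj_xw_def)
lemma uncurry2_at_c: "uncurry2 (\<lambda>x w. f x w c) = (\<lambda>z. uncurry3 f (embed_xw z + (0, 0, c)))"
  by (auto simp: uncurry2_def embed_xw_def)

lemma uncurry2_add: "uncurry2 (\<lambda>x w. a x w + b x w) = (\<lambda>z. uncurry2 a z + uncurry2 b z)"
  by (auto simp: uncurry2_def)
lemma uncurry2_mult: "uncurry2 (\<lambda>x w. a x w * b x w) = (\<lambda>z. uncurry2 a z * uncurry2 b z)"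
  by (auto simp: uncurry2_def)
lemma uncurry2_sum: "uncurry2 (\<lambda>x w. \<Sum>i\<in>S. a i x w) = (\<lambda>z. \<Sum>i\<in>S. uncurry2 (a i) z)"
  by (auto simp: uncurry2_def)
lemma uncurry2_const: "uncurry2 (\<lambda>x w. k) = (\<lambda>z. k)"
  by (auto simp: uncurry2_def)

lemma smooth3_add [simp]: "smooth3 a \<Longrightarrow> smooth3 b \<Longrightarrow> smooth3 (\<lambda>x w p. a x w p + b x w p)"
  unfolding smooth3_iff uncurry3_add by (rule smooth_fn_add)
lemma smooth3_diff [simp]: "smooth3 a \<Longrightarrow> smooth3 b \<Longrightarrow> smooth3 (\<lambda>x w p. a x w p - b x w p)"
  unfolding smooth3_iff uncurry3_diff by (rule smooth_fn_diff)
lemma smooth3_mult [simp]: "smooth3 a \<Longrightarrow> smooth3 b \<Longrightarrow> smooth3 (\<lambda>x w p. a x w p * b x w p)"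
  unfolding smooth3_iff uncurry3_mult by (rule smooth_fn_mult)
lemma smooth3_sum [simp]:
  "finite S \<Longrightarrow> (\<And>i. i \<in> S \<Longrightarrow> smooth3 (a i)) \<Longrightarrow> smooth3 (\<lambda>x w p. \<Sum>i\<in>S. a i x w p)"
  unfolding smooth3_iff uncurry3_sum by (rule smooth_fn_sum)
lemma smooth3_const [simp]: "smooth3 (\<lambda>x w p. k)"
  unfolding smooth3_iff uncurry3_const by (rule smooth_fn_const)
lemma smooth3_p_coord [simp]: "smooth3 (\<lambda>x w p. p $ k)"
  unfolding smooth3_iff uncurry3_p_coord by (rule smooth_fn_inner)
lemma smooth3_at_c [simp]: "smooth3 f \<Longrightarrow> smooth3 (\<lambda>x w p. f x w c)"
  unfolding smooth3_iff uncurry3_at_c by (rule smooth_fn_compose_affine[OF _ linear_freeze_p])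
lemma smooth3_lift [simp]: "smooth2 a \<Longrightarrow> smooth3 (\<lambda>x w p. a x w)"
  unfolding smooth3_iff smooth2_iff uncurry3_lift by (rule smooth_fn_compose_affine[OF _ linear_proj_xw])
lemma smooth3_Dp [simp]: "smooth3 g \<Longrightarrow> smooth3 (Dp k g)"
  by (simp add: Dp_eq_Ddir)
lemma smooth3_Dw [simp]: "smooth3 g \<Longrightarrow> smooth3 (Dw k g)"
  by (simp add: Dw_eq_Ddir)
lemma smooth3_Dx [simp]: "smooth3 g \<Longrightarrow> smooth3 (Dx g)"
  by (simp add: Dx_eq_Ddir)

lemma smooth2_add [simp]: "smooth2 a \<Longrightarrow> smooth2 b \<Longrightarrow> smooth2 (\<lambda>x w. a x w + b x w)"
  unfolding smooth2_iff uncurry2_add by (rule smooth_fn_add)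
lemma smooth2_mult [simp]: "smooth2 a \<Longrightarrow> smooth2 b \<Longrightarrow> smooth2 (\<lambda>x w. a x w * b x w)"
  unfolding smooth2_iff uncurry2_mult by (rule smooth_fn_mult)
lemma smooth2_sum [simp]:
  "finite S \<Longrightarrow> (\<And>i. i \<in> S \<Longrightarrow> smooth2 (a i)) \<Longrightarrow> smooth2 (\<lambda>x w. \<Sum>i\<in>S. a i x w)"
  unfolding smooth2_iff uncurry2_sum by (rule smooth_fn_sum)
lemma smooth2_const [simp]: "smooth2 (\<lambda>x w. k)"
  unfolding smooth2_iff uncurry2_const by (rule smooth_fn_const)
lemma smooth2_at_c [simp]: "smooth3 f \<Longrightarrow> smooth2 (\<lambda>x w. f x w c)"
  unfolding smooth3_iff smooth2_iff uncurry2_at_c by (rule smooth_fn_compose_affine[OF _ linear_embed_xw])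

lemma Ddir_add [simp]: "smooth3 a \<Longrightarrow> smooth3 b \<Longrightarrow>
    Ddir e (\<lambda>x w p. a x w p + b x w p) = (\<lambda>x w p. Ddir e a x w p + Ddir e b x w p)"
  unfolding smooth3_iff Ddir_def uncurry3_add by (simp add: dirderiv_add)
lemma Ddir_diff [simp]: "smooth3 a \<Longrightarrow> smooth3 b \<Longrightarrow>
    Ddir e (\<lambda>x w p. a x w p - b x w p) = (\<lambda>x w p. Ddir e a x w p - Ddir e b x w p)"
  unfolding smooth3_iff Ddir_def uncurry3_diff by (simp add: dirderiv_diff)
lemma Ddir_mult [simp]: "smooth3 a \<Longrightarrow> smooth3 b \<Longrightarrow>
    Ddir e (\<lambda>x w p. a x w p * b x w p) = (\<lambda>x w p. Ddir e a x w p * b x w p + a x w p * Ddir e b x w p)"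
  unfolding smooth3_iff Ddir_def uncurry3_mult by (simp add: dirderiv_mult)
lemma Ddir_sum [simp]: "finite S \<Longrightarrow> (\<And>i. i \<in> S \<Longrightarrow> smooth3 (a i)) \<Longrightarrow>
    Ddir e (\<lambda>x w p. \<Sum>i\<in>S. a i x w p) = (\<lambda>x w p. \<Sum>i\<in>S. Ddir e (a i) x w p)"
  unfolding smooth3_iff Ddir_def uncurry3_sum by (simp add: dirderiv_sum)
lemma Ddir_const [simp]: "Ddir e (\<lambda>x w p. k) = (\<lambda>x w p. 0)"
  unfolding Ddir_def uncurry3_const by (simp add: dirderiv_const)
lemma Ddir_p_coord [simp]: "Ddir e (\<lambda>x w p. p $ k) = (\<lambda>x w p. snd (snd e) $ k)"
  unfolding Ddir_def uncurry3_p_coord by (cases e) (simp add: dirderiv_inner eP_def inner_axis inner_Pair)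
lemma Ddir_at_c: "smooth3 f \<Longrightarrow> Ddir e (\<lambda>x w p. f x w c) = (\<lambda>x w p. Ddir (freeze_p e) f x w c)"
  unfolding smooth3_iff Ddir_def uncurry3_at_c
  by (simp only: dirderiv_compose_affine[OF _ linear_freeze_p]) (simp add: freeze_p_def)
lemma Ddir_lift: "smooth2 a \<Longrightarrow> Ddir e (\<lambda>x w p. a x w) = (\<lambda>x w p. Ddir2 (proj_xw e) a x w)"
  unfolding smooth2_iff Ddir_def Ddir2_def uncurry3_lift
  by (simp only: dirderiv_compose_affine[OF _ linear_proj_xw]) (simp add: proj_xw_def)
lemma Ddir_zero [simp]: "smooth3 g \<Longrightarrow> Ddir 0 g = (\<lambda>x w p. 0)"
  unfolding smooth3_iff Ddir_def by (simp add: dirderiv_zero_dir)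

lemma Ddir2_zero [simp]: "smooth2 g \<Longrightarrow> Ddir2 0 g = (\<lambda>x w. 0)"
  unfolding smooth2_iff Ddir2_def by (simp add: dirderiv_zero_dir)

lemma Ddir2_add [simp]: "smooth2 a \<Longrightarrow> smooth2 b \<Longrightarrow>
    Ddir2 e (\<lambda>x w. a x w + b x w) = (\<lambda>x w. Ddir2 e a x w + Ddir2 e b x w)"
  unfolding smooth2_iff Ddir2_def uncurry2_add by (simp add: dirderiv_add)
lemma Ddir2_mult [simp]: "smooth2 a \<Longrightarrow> smooth2 b \<Longrightarrow>
    Ddir2 e (\<lambda>x w. a x w * b x w) = (\<lambda>x w. Ddir2 e a x w * b x w + a x w * Ddir2 e b x w)"
  unfolding smooth2_iff Ddir2_def uncurry2_mult by (simp add: dirderiv_mult)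
lemma Ddir2_sum [simp]: "finite S \<Longrightarrow> (\<And>i. i \<in> S \<Longrightarrow> smooth2 (a i)) \<Longrightarrow>
    Ddir2 e (\<lambda>x w. \<Sum>i\<in>S. a i x w) = (\<lambda>x w. \<Sum>i\<in>S. Ddir2 e (a i) x w)"
  unfolding smooth2_iff Ddir2_def uncurry2_sum by (simp add: dirderiv_sum)
lemma Ddir2_const [simp]: "Ddir2 e (\<lambda>x w. k) = (\<lambda>x w. 0)"
  unfolding Ddir2_def uncurry2_const by (simp add: dirderiv_const)

lemma Ddir_at_c_zero:
  assumes "smooth3 g" "\<And>x w. g x w c = 0"
  shows "Ddir (freeze_p e) g x w c = 0"
proof -
  have "Ddir (freeze_p e) g x w c = Ddir e (\<lambda>x w p. g x w c) x w c"
    using Ddir_at_c[OF assms(1)] by simp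
  also have "(\<lambda>x w p. g x w c) = (\<lambda>x w p. 0)" using assms(2) by simp
  finally show ?thesis by simp
qed

lemma p_direction_eq_sum: "((0::real), (0::real^'m::finite), q) = (\<Sum>k\<in>UNIV. q $ k *\<^sub>R eP k)"
proof -
  have "q = (\<Sum>k\<in>UNIV. q $ k *\<^sub>R axis k 1)"
    by (simp add: vec_eq_iff axis_def if_distrib cong: if_cong)
  then show ?thesis by (simp add: eP_def prod_eq_iff fst_sum snd_sum)
qed

lemma const_in_p:
  assumes h: "smooth3 h" and d: "\<And>k x w p. Ddir (eP k) h x w p = 0"
  shows "h x w p = h x w c"
proof -
  have sh: "smooth_fn (uncurry3 h)" using h by (simp add: smooth3_iff)
  define v where "v = ((0::real), (0::real^'a), p - c)"
  have "dirderiv (uncurry3 h) v z = (\<Sum>k\<in>UNIV. (p - c) $ k * dirderiv (uncurry3 h) (eP k) z)" for z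
    unfolding v_def p_direction_eq_sum by (simp add: dirderiv_sum_dir[OF sh] dirderiv_scale_dir[OF sh])
  also have "\<dots> z = 0" for z
    using d by (simp add: dirderiv_uncurry3)
  finally have "((\<lambda>t. uncurry3 h ((x, w, c) + t *\<^sub>R v)) has_real_derivative 0) (at t)" for t
    using smooth_fn_line_derivative[OF sh, of "(x, w, c)" v t UNIV] by simp
  from DERIV_isconst_all[OF allI[OF this], of 1 0] show ?thesis by (simp add: v_def)
qed

lemma affine_in_p:
  assumes g: "smooth3 g" and dd: "\<And>j j' x w p. Ddir (eP j) (Ddir (eP j') g) x w p = 0"
  shows "g x w p = (\<Sum>j\<in>UNIV. Ddir (eP j) g x w c * (p $ j - c $ j)) + g x w c"
proof -
  define r where "r = (\<lambda>x w p. g x w p - (\<Sum>j\<in>UNIV. Ddir (eP j) g x w c * (p $ j - c $ j)) - g x w c)"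
  have sr: "smooth3 r" unfolding r_def using g by simp
  have dr: "Ddir (eP k) r = (\<lambda>x w p. Ddir (eP k) g x w p - Ddir (eP k) g x w c)" for k
    unfolding r_def using g by (simp add: Ddir_at_c)
  have "Ddir (eP k) r x w p = Ddir (eP k) r x w c" for k x w p
  proof (rule const_in_p)
    show "Ddir (eP l) (Ddir (eP k) r) x w p = 0" for l x w p
      unfolding dr using g dd by (simp add: Ddir_at_c)
  qed (use sr in simp)
  then have "Ddir (eP k) r x w p = 0" for k x w p
    unfolding dr by simp
  then have "r x w p = r x w c" by (rule const_in_p[OF sr])
  then show ?thesis unfolding r_def by simp
qed

section \<open>The inverse problem\<close>

definition solvability_conditions ::
    "('m::finite \<Rightarrow> 'm \<Rightarrow> 'm fn3) \<Rightarrow> ('m \<Rightarrow> 'm fn3) \<Rightarrow> real^'m \<Rightarrow> bool" where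
  "solvability_conditions FF F1 c \<longleftrightarrow>
     (\<forall>j j' j'' x w p. Dp j'' (FF j j') x w p = Dp j' (FF j j'') x w p) \<and>
     (\<forall>j j' x w p. Phi FF F1 j' j x w p + Phi FF F1 j j' x w p = 0) \<and>
     (\<forall>j j' j'' x w p. Dp j'' (Phi FF F1 j' j) x w p = Dw j (FF j' j'') x w p - Dw j' (FF j j'') x w p) \<and>
     (\<forall>j j' k x w. Dw2 k (\<lambda>x w. Phi FF F1 j' j x w c) x w + Dw2 j' (\<lambda>x w. Phi FF F1 j k x w c) x w
        + Dw2 j (\<lambda>x w. Phi FF F1 k j' x w c) x w = 0) \<and>
     (\<forall>j j' x w. Dw2 j (\<lambda>x w. F1 j' x w c) x w - Dw2 j' (\<lambda>x w. F1 j x w c) x w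
        + Dx2 (\<lambda>x w. Phi FF F1 j' j x w c) x w + (\<Sum>k\<in>UNIV. c $ k * Dw2 k (\<lambda>x w. Phi FF F1 j' j x w c) x w) = 0)"

lemma solvability_conditionsD:
  assumes "solvability_conditions FF F1 c"
  shows "\<forall>j j' j'' x w p. Dp j'' (FF j j') x w p = Dp j' (FF j j'') x w p"
    and "\<forall>j j' j'' x w p. Dp j'' (Phi FF F1 j' j) x w p = Dw j (FF j' j'') x w p - Dw j' (FF j j'') x w p"
proof -
  from assms show "\<forall>j j' j'' x w p. Dp j'' (FF j j') x w p = Dp j' (FF j j'') x w p"
    unfolding solvability_conditions_def by (rule conjunct1)
  from assms show "\<forall>j j' j'' x w p. Dp j'' (Phi FF F1 j' j) x w p
      = Dw j (FF j' j'') x w p - Dw j' (FF j j'') x w p"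
    unfolding solvability_conditions_def by (elim conjE)
qed

definition normalized_potential :: "('m::finite \<Rightarrow> 'm \<Rightarrow> 'm fn3) \<Rightarrow> real^'m \<Rightarrow> 'm fn3 \<Rightarrow> bool" where
  "normalized_potential FF c fb \<longleftrightarrow> smooth3 fb \<and> (\<forall>j j' x w p. Dp j (Dp j' fb) x w p = FF j j' x w p) \<and>
     (\<forall>x w. fb x w c = 0) \<and> (\<forall>j x w. Dp j fb x w c = 0)"

definition admissible_coefficients ::
    "('m::finite \<Rightarrow> 'm \<Rightarrow> 'm fn3) \<Rightarrow> ('m \<Rightarrow> 'm fn3) \<Rightarrow> real^'m \<Rightarrow> ('m \<Rightarrow> 'm fn2) \<Rightarrow> 'm fn2 \<Rightarrow> bool" where
  "admissible_coefficients FF F1 c A A0 \<longleftrightarrow> (\<forall>j. smooth2 (A j)) \<and> smooth2 A0 \<and>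
     (\<forall>j j' x w. Dw2 j (A j') x w - Dw2 j' (A j) x w = Phi FF F1 j' j x w c) \<and>
     (\<forall>j x w. Dw2 j A0 x w = F1 j x w c + Dx2 (A j) x w + (\<Sum>k\<in>UNIV. c $ k * Dw2 k (A j) x w))"

definition affine_extension :: "'m::finite fn3 \<Rightarrow> real^'m \<Rightarrow> ('m \<Rightarrow> 'm fn2) \<Rightarrow> 'm fn2 \<Rightarrow> 'm fn3" where
  "affine_extension fb c A A0 = (\<lambda>x w p. fb x w p + (\<Sum>j\<in>UNIV. A j x w * (p $ j - c $ j)) + A0 x w)"

text \<open>The left-hand side of the second equation of is_solution: the Euler-Lagrange expression
  e^j[f] without its terms in the second derivatives w_2.\<close>

definition euler_lagrange0 :: "'m::finite \<Rightarrow> 'm fn3 \<Rightarrow> 'm fn3" where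
  "euler_lagrange0 j g = (\<lambda>x w p. Dw j g x w p - Dx (Dp j g) x w p - (\<Sum>k\<in>UNIV. Dw k (Dp j g) x w p * p $ k))"

lemma is_solution_iff:
  "is_solution FF F1 f \<longleftrightarrow> smooth3 f \<and> (\<forall>j j'. Dp j (Dp j' f) = FF j j') \<and> (\<forall>j. euler_lagrange0 j f = F1 j)"
  unfolding is_solution_def euler_lagrange0_def by (auto simp: fun_eq_iff)

lemma smooth3_Phi:
  "(\<And>j j'. smooth3 (FF j j')) \<Longrightarrow> (\<And>j. smooth3 (F1 j)) \<Longrightarrow> smooth3 (Phi FF F1 j' j)"
  unfolding Phi_def by simp

subsection \<open>Necessity of the conditions\<close>

lemma is_solution_Ddir:
  assumes "is_solution FF F1 f"
  shows "smooth3 f" and "FF j j' = Ddir (eP j) (Ddir (eP j') f)"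
    and "F1 j = (\<lambda>x w p. Ddir (eW j) f x w p - Ddir eX (Ddir (eP j) f) x w p
                           - (\<Sum>k\<in>UNIV. Ddir (eW k) (Ddir (eP j) f) x w p * p $ k))"
proof -
  show sf: "smooth3 f" using assms by (simp add: is_solution_def)
  show "FF j j' = Ddir (eP j) (Ddir (eP j') f)"
    using assms sf by (auto simp: is_solution_def Dp_eq_Ddir[symmetric] fun_eq_iff)
  show "F1 j = (\<lambda>x w p. Ddir (eW j) f x w p - Ddir eX (Ddir (eP j) f) x w p
                         - (\<Sum>k\<in>UNIV. Ddir (eW k) (Ddir (eP j) f) x w p * p $ k))"
    using assms sf by (auto simp: is_solution_def Dp_eq_Ddir Dw_eq_Ddir Dx_eq_Ddir fun_eq_iff)
qed

text \<open>On a solution, Phi is the curl in w of the momenta f_p; all five conditions follow from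
  this by symmetry of second derivatives.\<close>

lemma Phi_solution:
  assumes sol: "is_solution FF F1 f"
  shows "Phi FF F1 j' j = (\<lambda>x w p. Ddir (eW j) (Ddir (eP j') f) x w p - Ddir (eW j') (Ddir (eP j) f) x w p)"
  unfolding Phi_def is_solution_Ddir(2,3)[OF sol] using is_solution_Ddir(1)[OF sol]
  by (simp add: Dp_eq_Ddir Dx_eq_Ddir Dw_eq_Ddir Ddir_commute sum.distrib sum_subtractf algebra_simps)

lemma solution_imp_solvability_conditions:
  assumes sol: "is_solution FF F1 f"
  shows "solvability_conditions FF F1 c"
proof -
  note sf = is_solution_Ddir(1)[OF sol] and FF = is_solution_Ddir(2)[OF sol]
    and F1 = is_solution_Ddir(3)[OF sol] and Phi = Phi_solution[OF sol]
  show ?thesis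
    unfolding solvability_conditions_def
  proof (intro conjI allI)
    show "Dp j'' (FF j j') x w p = Dp j' (FF j j'') x w p" for j j' j'' x w p
      unfolding FF using sf by (simp add: Dp_eq_Ddir Ddir_commute)
    show "Phi FF F1 j' j x w p + Phi FF F1 j j' x w p = 0" for j j' x w p
      unfolding Phi by simp
    show "Dp j'' (Phi FF F1 j' j) x w p = Dw j (FF j' j'') x w p - Dw j' (FF j j'') x w p" for j j' j'' x w p
      unfolding Phi FF using sf by (simp add: Dp_eq_Ddir Dw_eq_Ddir Ddir_commute)
    show "Dw2 k (\<lambda>x w. Phi FF F1 j' j x w c) x w + Dw2 j' (\<lambda>x w. Phi FF F1 j k x w c) x w
        + Dw2 j (\<lambda>x w. Phi FF F1 k j' x w c) x w = 0" for j j' k x w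
      unfolding Dw2_lift[where p=c] Phi using sf by (simp add: Dw_eq_Ddir Ddir_at_c Ddir_commute)
    show "Dw2 j (\<lambda>x w. F1 j' x w c) x w - Dw2 j' (\<lambda>x w. F1 j x w c) x w
        + Dx2 (\<lambda>x w. Phi FF F1 j' j x w c) x w + (\<Sum>k\<in>UNIV. c $ k * Dw2 k (\<lambda>x w. Phi FF F1 j' j x w c) x w) = 0"
      for j j' x w
      unfolding Dw2_lift[where p=c] Dx2_lift[where p=c] Phi F1 using sf
      by (simp add: Dw_eq_Ddir Dx_eq_Ddir Ddir_at_c Ddir_commute sum.distrib sum_subtractf algebra_simps)
  qed
qed

lemma same_p_hessian_imp_affine_in_p:
  assumes f: "smooth3 f" and g: "smooth3 g" and dd: "\<And>j j'. Dp j (Dp j' f) = Dp j (Dp j' g)"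
  shows "f x w p = g x w p + (\<Sum>j\<in>UNIV. (Dp j f x w c - Dp j g x w c) * (p $ j - c $ j)) + (f x w c - g x w c)"
proof -
  define h where "h = (\<lambda>x w p. f x w p - g x w p)"
  have sh: "smooth3 h" unfolding h_def using f g by simp
  have "h x w p = (\<Sum>j\<in>UNIV. Ddir (eP j) h x w c * (p $ j - c $ j)) + h x w c"
  proof (rule affine_in_p[OF sh])
    show "Ddir (eP j) (Ddir (eP j') h) x w p = 0" for j j' x w p
      using dd[of j j'] f g unfolding h_def by (simp add: Dp_eq_Ddir)
  qed
  then show ?thesis unfolding h_def using f g by (simp add: Dp_eq_Ddir algebra_simps)
qed

lemma normalized_potential_unique:
  assumes fb: "normalized_potential FF c fb" and gb: "normalized_potential FF c gb"
  shows "fb = gb"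
proof (intro ext)
  fix x w p
  have sfb: "smooth3 fb" and sgb: "smooth3 gb" and hess: "Dp j (Dp j' fb) = Dp j (Dp j' gb)" for j j'
    using fb gb by (simp_all add: normalized_potential_def fun_eq_iff)
  from same_p_hessian_imp_affine_in_p[OF sfb sgb hess, of x w p c]
  show "fb x w p = gb x w p"
    using fb gb by (simp add: normalized_potential_def)
qed

lemma solution_eq_affine_extension:
  assumes sol: "is_solution FF F1 f" and fb: "normalized_potential FF c fb"
  shows "\<exists>A A0. admissible_coefficients FF F1 c A A0 \<and> f = affine_extension fb c A A0"
proof (intro exI conjI)
  note sf = is_solution_Ddir(1)[OF sol] and Phi = Phi_solution[OF sol]
    and F1 = is_solution_Ddir(3)[OF sol]
  define A where "A = (\<lambda>j x w. Dp j f x w c)"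
  define A0 where "A0 = (\<lambda>x w. f x w c)"
  show "admissible_coefficients FF F1 c A A0"
    unfolding admissible_coefficients_def A_def A0_def
      Dw2_lift[where p=c] Dx2_lift[where p=c] Phi F1 using sf
    by (simp add: Dw_eq_Ddir Dp_eq_Ddir Dx_eq_Ddir Ddir_at_c mult.commute)
  show "f = affine_extension fb c A A0"
  proof (intro ext)
    fix x w p
    have sfb: "smooth3 fb" and fb0: "fb x w c = 0" and fb1: "\<And>j. Dp j fb x w c = 0"
      using fb by (simp_all add: normalized_potential_def)
    have "Dp j (Dp j' f) = Dp j (Dp j' fb)" for j j'
      using sol fb by (simp add: is_solution_def normalized_potential_def fun_eq_iff)
    from same_p_hessian_imp_affine_in_p[OF sf sfb this, of x w p c]
    show "f x w p = affine_extension fb c A A0 x w p"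
      unfolding affine_extension_def A_def A0_def fb0 fb1 by simp
  qed
qed

lemma normalized_potential_Ddir_at_c:
  assumes fb: "normalized_potential FF c fb"
  shows "Ddir (eW k) fb x w c = 0"
    and "Ddir (eW k) (Ddir (eP i) fb) x w c = 0" and "Ddir (eP i) (Ddir (eW k) fb) x w c = 0"
    and "Ddir eX (Ddir (eP i) fb) x w c = 0" and "Ddir (eP i) (Ddir eX fb) x w c = 0"
proof -
  have sfb: "smooth3 fb" and fb0: "\<And>x w. fb x w c = 0" and fb1: "\<And>j x w. Dp j fb x w c = 0"
    using fb unfolding normalized_potential_def by blast+
  show "Ddir (eW k) fb x w c = 0"
    using Ddir_at_c_zero[of fb c "eW k"] sfb fb0 by simp
  show W: "Ddir (eW k) (Ddir (eP i) fb) x w c = 0"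
    using Ddir_at_c_zero[of "Ddir (eP i) fb" c "eW k"] sfb fb1 by (simp add: Dp_eq_Ddir)
  then show "Ddir (eP i) (Ddir (eW k) fb) x w c = 0"
    using sfb by (simp add: Ddir_commute)
  show X: "Ddir eX (Ddir (eP i) fb) x w c = 0"
    using Ddir_at_c_zero[of "Ddir (eP i) fb" c "eX"] sfb fb1 by (simp add: Dp_eq_Ddir)
  then show "Ddir (eP i) (Ddir eX fb) x w c = 0"
    using sfb by (simp add: Ddir_commute)
qed

text \<open>Condition (c) says that the w-curl of the momenta of fb differs from Phi by a function
  independent of p.\<close>

lemma curl_normalized_potential:
  assumes FF_smooth: "\<And>j j'. smooth3 (FF j j')" and F1_smooth: "\<And>j. smooth3 (F1 j)"
    and cc: "\<forall>j j' j'' x w p. Dp j'' (Phi FF F1 j' j) x w p = Dw j (FF j' j'') x w p - Dw j' (FF j j'') x w p"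
    and fb: "normalized_potential FF c fb"
  shows "Ddir (eW j) (Ddir (eP i) fb) x w p - Ddir (eW i) (Ddir (eP j) fb) x w p
    = Phi FF F1 i j x w p - Phi FF F1 i j x w c"
proof -
  have sfb: "smooth3 fb" using fb by (simp add: normalized_potential_def)
  have FFd: "FF j j' = Ddir (eP j) (Ddir (eP j') fb)" for j j'
    using fb sfb by (auto simp: normalized_potential_def Dp_eq_Ddir fun_eq_iff)
  have sPhi: "smooth3 (Phi FF F1 i' j')" for i' j' by (rule smooth3_Phi[OF FF_smooth F1_smooth])
  have Dp_Phi: "Ddir (eP l) (Phi FF F1 i j) x w p = Ddir (eW j) (Ddir (eP i) (Ddir (eP l) fb)) x w p
      - Ddir (eW i) (Ddir (eP j) (Ddir (eP l) fb)) x w p" for l x w p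
    using cc sPhi sfb unfolding FFd by (simp add: Dp_eq_Ddir Dw_eq_Ddir)
  define H where "H = (\<lambda>x w p. Ddir (eW j) (Ddir (eP i) fb) x w p - Ddir (eW i) (Ddir (eP j) fb) x w p
    - Phi FF F1 i j x w p)"
  have "H x w p = H x w c"
  proof (rule const_in_p)
    show "smooth3 H" unfolding H_def using sfb sPhi by simp
    show "Ddir (eP l) H x w p = 0" for l x w p
      unfolding H_def using sfb sPhi Dp_Phi by (simp add: Ddir_commute)
  qed
  also have "H x w c = - Phi FF F1 i j x w c"
    unfolding H_def using normalized_potential_Ddir_at_c[OF fb] by simp
  finally show ?thesis unfolding H_def by simp
qed

lemma euler_lagrange0_normalized_potential:
  assumes FF_smooth: "\<And>j j'. smooth3 (FF j j')" and F1_smooth: "\<And>j. smooth3 (F1 j)"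
    and cc: "\<forall>j j' j'' x w p. Dp j'' (Phi FF F1 j' j) x w p = Dw j (FF j' j'') x w p - Dw j' (FF j j'') x w p"
    and fb: "normalized_potential FF c fb"
  shows "euler_lagrange0 j fb x w p = F1 j x w p - F1 j x w c - (\<Sum>i\<in>UNIV. Phi FF F1 i j x w c * (p $ i - c $ i))"
proof -
  have sfb: "smooth3 fb" using fb by (simp add: normalized_potential_def)
  have FFd: "FF j j' = Ddir (eP j) (Ddir (eP j') fb)" for j j'
    using fb sfb by (auto simp: normalized_potential_def Dp_eq_Ddir fun_eq_iff)
  have sPhi: "smooth3 (Phi FF F1 i j)" for i j by (rule smooth3_Phi[OF FF_smooth F1_smooth])
  define K where "K = (\<lambda>x w p. euler_lagrange0 j fb x w p - F1 j x w p + F1 j x w c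
    + (\<Sum>i\<in>UNIV. Phi FF F1 i j x w c * (p $ i - c $ i)))"
  have "K x w p = K x w c"
  proof (rule const_in_p)
    show "smooth3 K" unfolding K_def euler_lagrange0_def using sfb F1_smooth sPhi by simp
    have "Ddir (eP i) K x w p = Ddir (eW j) (Ddir (eP i) fb) x w p - Ddir (eW i) (Ddir (eP j) fb) x w p
        - Phi FF F1 i j x w p + Phi FF F1 i j x w c" for i x w p
      unfolding K_def euler_lagrange0_def using sfb F1_smooth sPhi
      by (simp add: Dp_eq_Ddir Dw_eq_Ddir Dx_eq_Ddir Ddir_at_c Phi_def FFd Ddir_commute sum.distrib
          sum_subtractf algebra_simps)
    then show "Ddir (eP i) K x w p = 0" for i x w p
      unfolding curl_normalized_potential[OF FF_smooth F1_smooth cc fb] by simp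
  qed
  also have "K x w c = 0"
    unfolding K_def euler_lagrange0_def using sfb normalized_potential_Ddir_at_c[OF fb]
    by (simp add: Dp_eq_Ddir Dw_eq_Ddir Dx_eq_Ddir)
  finally show ?thesis unfolding K_def by (simp add: algebra_simps)
qed

lemma affine_extension_is_solution:
  assumes FF_smooth: "\<And>j j'. smooth3 (FF j j')" and F1_smooth: "\<And>j. smooth3 (F1 j)"
    and cc: "\<forall>j j' j'' x w p. Dp j'' (Phi FF F1 j' j) x w p = Dw j (FF j' j'') x w p - Dw j' (FF j j'') x w p"
    and fb: "normalized_potential FF c fb" and A: "admissible_coefficients FF F1 c A A0"
  shows "is_solution FF F1 (affine_extension fb c A A0)"
proof -
  define f where "f = affine_extension fb c A A0"
  have sfb: "smooth3 fb" using fb by (simp add: normalized_potential_def)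
  have sA: "smooth2 (A j)" and sA0: "smooth2 A0" for j
    using A by (simp_all add: admissible_coefficients_def)
  have sf: "smooth3 f" unfolding f_def affine_extension_def using sfb sA sA0 by simp
  have FFd: "FF j j' = Ddir (eP j) (Ddir (eP j') fb)" for j j'
    using fb sfb by (auto simp: normalized_potential_def Dp_eq_Ddir fun_eq_iff)
  have "Dp j (Dp j' f) = FF j j'" for j j'
    unfolding f_def affine_extension_def FFd using sfb sA sA0 by (simp add: Dp_eq_Ddir Ddir_lift)
  moreover have "euler_lagrange0 j f = F1 j" for j
  proof (intro ext)
    fix x w p
    have eqA: "Ddir2 (eW2 j) (A i) x w = Ddir2 (eW2 i) (A j) x w + Phi FF F1 i j x w c" for i
    proof -
      have "Dw2 j (A i) x w - Dw2 i (A j) x w = Phi FF F1 i j x w c"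
        using A by (simp add: admissible_coefficients_def)
      then show ?thesis unfolding Dw2_eq_Ddir2[OF sA] by linarith
    qed
    have eqA0: "Ddir2 (eW2 j) A0 x w = F1 j x w c + Ddir2 eX2 (A j) x w
        + (\<Sum>k\<in>UNIV. c $ k * Ddir2 (eW2 k) (A j) x w)"
      using A sA sA0 by (simp add: admissible_coefficients_def Dw2_eq_Ddir2 Dx2_eq_Ddir2)
    have "euler_lagrange0 j f x w p = euler_lagrange0 j fb x w p
        + (\<Sum>i\<in>UNIV. Ddir2 (eW2 j) (A i) x w * (p $ i - c $ i))
        + Ddir2 (eW2 j) A0 x w - Ddir2 eX2 (A j) x w - (\<Sum>k\<in>UNIV. Ddir2 (eW2 k) (A j) x w * p $ k)"
      unfolding f_def affine_extension_def euler_lagrange0_def using sfb sA sA0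
      by (simp add: Dp_eq_Ddir Dw_eq_Ddir Dx_eq_Ddir Ddir_lift sum.distrib sum_subtractf algebra_simps)
    also have "\<dots> = F1 j x w p"
      unfolding euler_lagrange0_normalized_potential[OF FF_smooth F1_smooth cc fb] eqA eqA0
      by (simp add: sum.distrib sum_subtractf algebra_simps)
    finally show "euler_lagrange0 j f x w p = F1 j x w p" .
  qed
  ultimately show ?thesis unfolding f_def[symmetric] is_solution_iff using sf by blast
qed

subsection \<open>Sufficiency of the conditions\<close>

lemma normalized_potential_exists:
  fixes FF :: "'m::finite \<Rightarrow> 'm \<Rightarrow> 'm fn3"
  assumes FF_sym: "\<And>j j'. FF j j' = FF j' j" and FF_smooth: "\<And>j j'. smooth3 (FF j j')"
    and aa: "\<forall>j j' j'' x w p. Dp j'' (FF j j') x w p = Dp j' (FF j j'') x w p"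
  shows "\<exists>fb. normalized_potential FF c fb"
proof -
  interpret P: orthonormal_frame "eP :: 'm \<Rightarrow> 'm pt3" "(0, 0, c)"
    by unfold_locales (rule inner_eP)
  have coord: "P.coord i (x, w, c) = 0" for i x w
    by (simp add: P.coord_def eP_def inner_Pair inner_axis)
  define B where "B = (\<lambda>j'. P.cone_integral 0 (\<lambda>i. uncurry3 (FF i j')))"
  have smB: "smooth_fn (uncurry3 (FF i j'))" for i j'
    using FF_smooth by (simp add: smooth3_iff)
  have closed_FF: "dirderiv (uncurry3 (FF i j')) (eP l) z = dirderiv (uncurry3 (FF l j')) (eP i) z"
    for i j' l z
  proof -
    have "Dp l (FF j' i) x w p = Dp i (FF j' l) x w p" for x w p using aa by blast
    then have "Ddir (eP l) (FF i j') x w p = Ddir (eP i) (FF l j') x w p" for x w p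
      using FF_smooth by (simp add: Dp_eq_Ddir FF_sym[of j' i] FF_sym[of j' l])
    then show ?thesis by (simp add: dirderiv_uncurry3)
  qed
  have B: "smooth_fn (B j')" "dirderiv (B j') (eP i) z = uncurry3 (FF i j') z" for i j' z
    unfolding B_def
    by (rule P.smooth_fn_cone_integral[OF smB], rule P.poincare_closed_1form[OF smB closed_FF])
  define G where "G = P.cone_integral 0 B"
  have closed_B: "dirderiv (B i) (eP j) z = dirderiv (B j) (eP i) z" for i j z
    unfolding B(2) using FF_sym by simp
  have G: "smooth_fn G" "dirderiv G (eP i) z = B i z" for i z
    unfolding G_def
    by (rule P.smooth_fn_cone_integral[OF B(1)], rule P.poincare_closed_1form[OF B(1) closed_B])
  define fb where "fb = (\<lambda>x w p. G (x, w, p))"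
  have ufb: "uncurry3 fb = G" by (auto simp: fb_def uncurry3_def)
  have sfb: "smooth3 fb" using G(1) by (simp add: smooth3_iff ufb)
  have Dp_fb: "uncurry3 (Dp j fb) = B j" for j
    using sfb by (simp add: Dp_eq_Ddir uncurry3_Ddir ufb G(2) fun_eq_iff)
  have "Dp j (Dp j' fb) x w p = FF j j' x w p" for j j' x w p
    using sfb by (simp add: Dp_eq_Ddir[of "Dp j' fb"] Ddir_def Dp_fb B(2))
  moreover have "fb x w c = 0" for x w
    unfolding fb_def G_def by (rule P.cone_integral_base) (simp add: coord)
  moreover have "Dp j fb x w c = 0" for j x w
    using uncurry3_apply[of "Dp j fb" x w c] unfolding Dp_fb B_def
    by (simp add: P.cone_integral_base coord)
  ultimately show ?thesis using sfb unfolding normalized_potential_def by blast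
qed

lemma coefficients_A_exist:
  fixes \<phi> :: "'m::finite \<Rightarrow> 'm \<Rightarrow> 'm fn2"
  assumes sphi: "\<And>j j'. smooth2 (\<phi> j' j)"
    and anti: "\<And>j j' x w. \<phi> j' j x w + \<phi> j j' x w = 0"
    and closed: "\<And>j j' k x w. Dw2 k (\<phi> j' j) x w + Dw2 j' (\<phi> j k) x w + Dw2 j (\<phi> k j') x w = 0"
  shows "\<exists>A. (\<forall>j. smooth2 (A j)) \<and> (\<forall>j j' x w. Dw2 j (A j') x w - Dw2 j' (A j) x w = \<phi> j' j x w)"
proof -
  interpret P: orthonormal_frame "eW2 :: 'm \<Rightarrow> 'm pt2" 0
    by unfold_locales (rule inner_eW2)
  define \<omega> where "\<omega> = (\<lambda>j j'. uncurry2 (\<phi> j' j))"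
  have sm: "smooth_fn (\<omega> j j')" for j j'
    unfolding \<omega>_def using sphi by (simp add: smooth2_iff)
  have anti': "\<omega> j j' z = - \<omega> j' j z" for j j' z
    unfolding \<omega>_def using anti[of j' j "fst z" "snd z"] by (cases z) simp
  have closed': "dirderiv (\<omega> j j') (eW2 k) z + dirderiv (\<omega> j' k) (eW2 j) z + dirderiv (\<omega> k j) (eW2 j') z = 0"
    for j j' k z
    using closed[of k j' j "fst z" "snd z"] sphi
    unfolding \<omega>_def dirderiv_uncurry2 by (simp add: Dw2_eq_Ddir2 algebra_simps)
  define A where "A = (\<lambda>j' x w. P.cone_integral 1 (\<lambda>k. \<omega> k j') (x, w))"
  have uA: "uncurry2 (A j') = P.cone_integral 1 (\<lambda>k. \<omega> k j')" for j'
    by (auto simp: A_def uncurry2_def)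
  have sA: "smooth2 (A j)" for j
    unfolding smooth2_iff uA by (rule P.smooth_fn_cone_integral[OF sm])
  have "Dw2 j (A j') x w - Dw2 j' (A j) x w = \<phi> j' j x w" for j j' x w
    using P.poincare_closed_2form[OF sm anti' closed', of j' j "(x, w)"] sA
    by (simp add: Dw2_eq_Ddir2 Ddir2_def uA \<omega>_def)
  then show ?thesis using sA by blast
qed

text \<open>Condition (e) says precisely that the right-hand sides of the equations for A0 form a
  closed 1-form in w.\<close>

lemma coefficient_A0_rhs_closed:
  fixes \<psi> :: "'m::finite \<Rightarrow> 'm fn2" and \<phi> :: "'m \<Rightarrow> 'm \<Rightarrow> 'm fn2"
  assumes spsi: "\<And>j. smooth2 (\<psi> j)" and sphi: "\<And>j j'. smooth2 (\<phi> j' j)" and sA: "\<And>j. smooth2 (A j)"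
    and eqA: "\<And>j j'. Ddir2 (eW2 j) (A j') = (\<lambda>x w. Ddir2 (eW2 j') (A j) x w + \<phi> j' j x w)"
    and ee: "\<And>j j' x w. Ddir2 (eW2 j) (\<psi> j') x w - Ddir2 (eW2 j') (\<psi> j) x w + Ddir2 eX2 (\<phi> j' j) x w
                    + (\<Sum>k\<in>UNIV. c $ k * Ddir2 (eW2 k) (\<phi> j' j) x w) = 0"
  shows "Ddir2 (eW2 j) (\<lambda>x w. \<psi> i x w + Ddir2 eX2 (A i) x w + (\<Sum>k\<in>UNIV. c $ k * Ddir2 (eW2 k) (A i) x w)) x w
    = Ddir2 (eW2 i) (\<lambda>x w. \<psi> j x w + Ddir2 eX2 (A j) x w + (\<Sum>k\<in>UNIV. c $ k * Ddir2 (eW2 k) (A j) x w)) x w"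
    (is "Ddir2 (eW2 j) (?b i) x w = Ddir2 (eW2 i) (?b j) x w")
proof -
  have X: "Ddir2 eX2 (Ddir2 (eW2 j) (A i)) = (\<lambda>x w. Ddir2 eX2 (Ddir2 (eW2 i) (A j)) x w + Ddir2 eX2 (\<phi> i j) x w)"
    unfolding eqA[of j i] using sA sphi by simp
  have W: "Ddir2 (eW2 k) (Ddir2 (eW2 j) (A i))
      = (\<lambda>x w. Ddir2 (eW2 k) (Ddir2 (eW2 i) (A j)) x w + Ddir2 (eW2 k) (\<phi> i j) x w)" for k
    unfolding eqA[of j i] using sA sphi by simp
  have "Ddir2 (eW2 j) (?b i) x w = Ddir2 (eW2 j) (\<psi> i) x w + Ddir2 eX2 (Ddir2 (eW2 j) (A i)) x w
      + (\<Sum>k\<in>UNIV. c $ k * Ddir2 (eW2 k) (Ddir2 (eW2 j) (A i)) x w)"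
    using spsi sA by (simp add: Ddir2_commute[of "A i"])
  also have "\<dots> = Ddir2 (eW2 j) (\<psi> i) x w + Ddir2 eX2 (Ddir2 (eW2 i) (A j)) x w + Ddir2 eX2 (\<phi> i j) x w
      + (\<Sum>k\<in>UNIV. c $ k * Ddir2 (eW2 k) (Ddir2 (eW2 i) (A j)) x w)
      + (\<Sum>k\<in>UNIV. c $ k * Ddir2 (eW2 k) (\<phi> i j) x w)"
    unfolding X W by (simp add: sum.distrib algebra_simps)
  also have "\<dots> = Ddir2 (eW2 i) (\<psi> j) x w + Ddir2 eX2 (Ddir2 (eW2 i) (A j)) x w
      + (\<Sum>k\<in>UNIV. c $ k * Ddir2 (eW2 k) (Ddir2 (eW2 i) (A j)) x w)"
    using ee[of j i x w] by simp
  also have "\<dots> = Ddir2 (eW2 i) (?b j) x w"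
    using spsi sA by (simp add: Ddir2_commute[of "A j"])
  finally show ?thesis .
qed

lemma coefficient_A0_exists:
  fixes \<psi> :: "'m::finite \<Rightarrow> 'm fn2" and \<phi> :: "'m \<Rightarrow> 'm \<Rightarrow> 'm fn2"
  assumes spsi: "\<And>j. smooth2 (\<psi> j)" and sphi: "\<And>j j'. smooth2 (\<phi> j' j)" and sA: "\<And>j. smooth2 (A j)"
    and eqA: "\<And>j j' x w. Dw2 j (A j') x w - Dw2 j' (A j) x w = \<phi> j' j x w"
    and ee: "\<And>j j' x w. Dw2 j (\<psi> j') x w - Dw2 j' (\<psi> j) x w + Dx2 (\<phi> j' j) x w
                    + (\<Sum>k\<in>UNIV. c $ k * Dw2 k (\<phi> j' j) x w) = 0"
  shows "\<exists>A0. smooth2 A0 \<and>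
    (\<forall>j x w. Dw2 j A0 x w = \<psi> j x w + Dx2 (A j) x w + (\<Sum>k\<in>UNIV. c $ k * Dw2 k (A j) x w))"
proof -
  interpret P: orthonormal_frame "eW2 :: 'm \<Rightarrow> 'm pt2" 0
    by unfold_locales (rule inner_eW2)
  define b where "b = (\<lambda>j x w. \<psi> j x w + Ddir2 eX2 (A j) x w + (\<Sum>k\<in>UNIV. c $ k * Ddir2 (eW2 k) (A j) x w))"
  have smb: "smooth_fn (uncurry2 (b i))" for i
    unfolding b_def using spsi sA by (simp add: smooth2_iff[symmetric])
  have eqA': "Ddir2 (eW2 j) (A j') = (\<lambda>x w. Ddir2 (eW2 j') (A j) x w + \<phi> j' j x w)" for j j'
    using eqA[of j j'] sA by (auto simp: fun_eq_iff Dw2_eq_Ddir2 algebra_simps)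
  have ee': "Ddir2 (eW2 j) (\<psi> j') x w - Ddir2 (eW2 j') (\<psi> j) x w + Ddir2 eX2 (\<phi> j' j) x w
      + (\<Sum>k\<in>UNIV. c $ k * Ddir2 (eW2 k) (\<phi> j' j) x w) = 0" for j j' x w
    using ee[of j j' x w] spsi sphi by (simp add: Dw2_eq_Ddir2 Dx2_eq_Ddir2)
  have closed_b: "dirderiv (uncurry2 (b i)) (eW2 j) z = dirderiv (uncurry2 (b j)) (eW2 i) z" for i j z
    unfolding dirderiv_uncurry2 b_def by (rule coefficient_A0_rhs_closed[OF spsi sphi sA eqA' ee'])
  have G: "smooth_fn (P.cone_integral 0 (\<lambda>i. uncurry2 (b i)))"
      "dirderiv (P.cone_integral 0 (\<lambda>i. uncurry2 (b i))) (eW2 i) z = uncurry2 (b i) z" for i z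
    by (rule P.smooth_fn_cone_integral[OF smb], rule P.poincare_closed_1form[OF smb closed_b])
  define A0 where "A0 = (\<lambda>x w. P.cone_integral 0 (\<lambda>i. uncurry2 (b i)) (x, w))"
  have uA0: "uncurry2 A0 = P.cone_integral 0 (\<lambda>i. uncurry2 (b i))"
    by (auto simp: A0_def uncurry2_def)
  have sA0: "smooth2 A0" using G(1) by (simp add: smooth2_iff uA0)
  have "Dw2 j A0 x w = uncurry2 (b j) (x, w)" for j x w
    using sA0 by (simp add: Dw2_eq_Ddir2 Ddir2_def uA0 G(2))
  then have "Dw2 j A0 x w = \<psi> j x w + Dx2 (A j) x w + (\<Sum>k\<in>UNIV. c $ k * Dw2 k (A j) x w)" for j x w
    by (simp add: b_def Dx2_eq_Ddir2[OF sA] Dw2_eq_Ddir2[OF sA])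
  then show ?thesis using sA0 by blast
qed

lemma solvability_conditions_imp_solution:
  assumes FF_sym: "\<And>j j'. FF j j' = FF j' j"
    and FF_smooth: "\<And>j j'. smooth3 (FF j j')" and F1_smooth: "\<And>j. smooth3 (F1 j)"
    and conds: "solvability_conditions FF F1 c"
  shows "\<exists>f. is_solution FF F1 f"
proof -
  note cd = conds[unfolded solvability_conditions_def]
  obtain fb where fb: "normalized_potential FF c fb"
    using normalized_potential_exists[of FF c, OF FF_sym FF_smooth solvability_conditionsD(1)[OF conds]]
    by blast
  have sphi: "smooth2 (\<lambda>x w. Phi FF F1 j' j x w c)" for j j'
    using smooth3_Phi[OF FF_smooth F1_smooth] by simp
  have spsi: "smooth2 (\<lambda>x w. F1 j x w c)" for j
    using F1_smooth by simp
  have anti: "Phi FF F1 j' j x w c + Phi FF F1 j j' x w c = 0" for j j' x w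
    using cd by blast
  have closed: "Dw2 k (\<lambda>x w. Phi FF F1 j' j x w c) x w + Dw2 j' (\<lambda>x w. Phi FF F1 j k x w c) x w
      + Dw2 j (\<lambda>x w. Phi FF F1 k j' x w c) x w = 0" for j j' k x w
    using cd by blast
  obtain A where sA: "\<And>j. smooth2 (A j)"
    and eqA: "\<And>j j' x w. Dw2 j (A j') x w - Dw2 j' (A j) x w = Phi FF F1 j' j x w c"
    using coefficients_A_exist[where \<phi>="\<lambda>j' j x w. Phi FF F1 j' j x w c", OF sphi anti closed] by blast
  have ee: "Dw2 j (\<lambda>x w. F1 j' x w c) x w - Dw2 j' (\<lambda>x w. F1 j x w c) x w
      + Dx2 (\<lambda>x w. Phi FF F1 j' j x w c) x w
      + (\<Sum>k\<in>UNIV. c $ k * Dw2 k (\<lambda>x w. Phi FF F1 j' j x w c) x w) = 0" for j j' x w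
    using cd by blast
  obtain A0 where "smooth2 A0"
    "\<forall>j x w. Dw2 j A0 x w = F1 j x w c + Dx2 (A j) x w + (\<Sum>k\<in>UNIV. c $ k * Dw2 k (A j) x w)"
    using coefficient_A0_exists[where \<psi>="\<lambda>j x w. F1 j x w c" and \<phi>="\<lambda>j' j x w. Phi FF F1 j' j x w c",
        OF spsi sphi sA eqA ee] by blast
  with sA eqA have "admissible_coefficients FF F1 c A A0"
    unfolding admissible_coefficients_def by blast
  then have "is_solution FF F1 (affine_extension fb c A A0)"
    using affine_extension_is_solution[of FF F1 c fb A A0, OF FF_smooth F1_smooth _ fb] cd by blast
  then show ?thesis by blast
qed

theorem theorem4p1:
  fixes FF :: "'m::finite \<Rightarrow> 'm \<Rightarrow> 'm fn3"
    and F1 :: "'m \<Rightarrow> 'm fn3"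
    and c :: "real^'m"
  assumes FF_sym: "\<And>j j'. FF j j' = FF j' j"
    and FF_smooth: "\<And>j j'. smooth3 (FF j j')"
    and F1_smooth: "\<And>j. smooth3 (F1 j)"
  defines "\<phi> \<equiv> (\<lambda>j' j x w. Phi FF F1 j' j x w c)"
    and "\<psi> \<equiv> (\<lambda>j x w. F1 j x w c)"
  shows
   "((\<exists>f. is_solution FF F1 f) \<longleftrightarrow>
      ((\<forall>j j' j'' x w p. Dp j'' (FF j j') x w p = Dp j' (FF j j'') x w p) \<and>
       (\<forall>j j' x w p. Phi FF F1 j' j x w p + Phi FF F1 j j' x w p = 0) \<and>
       (\<forall>j j' j'' x w p. Dp j'' (Phi FF F1 j' j) x w p
                          = Dw j (FF j' j'') x w p - Dw j' (FF j j'') x w p) \<and>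
       (\<forall>j j' k x w. Dw2 k (\<phi> j' j) x w + Dw2 j' (\<phi> j k) x w + Dw2 j (\<phi> k j') x w = 0) \<and>
       (\<forall>j j' x w. Dw2 j (\<psi> j') x w - Dw2 j' (\<psi> j) x w + Dx2 (\<phi> j' j) x w
                    + (\<Sum>k\<in>UNIV. c $ k * Dw2 k (\<phi> j' j) x w) = 0)))
    \<and>
    ((\<exists>f. is_solution FF F1 f) \<longrightarrow>
      (\<exists>!fb. smooth3 fb \<and> (\<forall>j j' x w p. Dp j (Dp j' fb) x w p = FF j j' x w p) \<and>
             (\<forall>x w. fb x w c = 0) \<and> (\<forall>j x w. Dp j fb x w c = 0)) \<and>
      (\<forall>fb. smooth3 fb \<and> (\<forall>j j' x w p. Dp j (Dp j' fb) x w p = FF j j' x w p) \<and>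
             (\<forall>x w. fb x w c = 0) \<and> (\<forall>j x w. Dp j fb x w c = 0) \<longrightarrow>
        (\<forall>f. is_solution FF F1 f \<longleftrightarrow>
           (\<exists>A :: 'm \<Rightarrow> 'm fn2. \<exists>A0 :: 'm fn2.
              (\<forall>j. smooth2 (A j)) \<and> smooth2 A0 \<and>
              (\<forall>j j' x w. Dw2 j (A j') x w - Dw2 j' (A j) x w = \<phi> j' j x w) \<and>
              (\<forall>j x w. Dw2 j A0 x w = \<psi> j x w + Dx2 (A j) x w
                                      + (\<Sum>k\<in>UNIV. c $ k * Dw2 k (A j) x w)) \<and>
              f = (\<lambda>x w p. fb x w p + (\<Sum>j\<in>UNIV. A j x w * (p $ j - c $ j)) + A0 x w)))))"
proof -
  have solvable_iff: "(\<exists>f. is_solution FF F1 f) \<longleftrightarrow> solvability_conditions FF F1 c"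
    using solution_imp_solvability_conditions
      solvability_conditions_imp_solution[of FF F1 c, OF FF_sym FF_smooth F1_smooth] by blast
  have potential: "\<exists>!fb. normalized_potential FF c fb" if conds: "solvability_conditions FF F1 c"
  proof -
    obtain fb where "normalized_potential FF c fb"
      using normalized_potential_exists[of FF c, OF FF_sym FF_smooth solvability_conditionsD(1)[OF conds]]
      by blast
    then show ?thesis using normalized_potential_unique by blast
  qed
  have solutions: "is_solution FF F1 f \<longleftrightarrow>
      (\<exists>A A0. admissible_coefficients FF F1 c A A0 \<and> f = affine_extension fb c A A0)"
    if conds: "solvability_conditions FF F1 c" and fb: "normalized_potential FF c fb" for f fb
    using solution_eq_affine_extension[OF _ fb]
      affine_extension_is_solution[of FF F1 c fb, OF FF_smooth F1_smooth solvability_conditionsD(2)[OF conds] fb]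
    by blast
  have "(\<exists>f. is_solution FF F1 f) \<longrightarrow> (\<exists>!fb. normalized_potential FF c fb) \<and>
      (\<forall>fb. normalized_potential FF c fb \<longrightarrow> (\<forall>f. is_solution FF F1 f \<longleftrightarrow>
        (\<exists>A A0. admissible_coefficients FF F1 c A A0 \<and> f = affine_extension fb c A A0)))"
    using solvable_iff potential solutions by blast
  with solvable_iff show ?thesis
    unfolding assms(4,5) solvability_conditions_def normalized_potential_def admissible_coefficients_def
      affine_extension_def conj_assoc
    by (rule conjI)
qed

end
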